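(* Let $\mathcal X,\mathcal Y$ be nonempty convex compact sets and $\mathcal L:\mathcal X\times\mathcal Y\to\mathbb R$ a differentiable, uniformly strongly convex-concave function with saddle point $(x^*,y^* )$ and finite curvature constant $C_{\mathcal L}$. Consider either (I) $(x^*,y^* )$ in the relative interior of $\mathcal X\times\mathcal Y$, $\mu^{int}_{\mathcal L}>0$, with $(g_t,\nu,\mu_{\mathcal L}):=(g_t^{FW},\nu^{FW},\mu^{int}_{\mathcal L})$, $\nu^{FW}:=1-\frac{M_{\mathcal L}}{\sqrt{\mu^{int}_{\mathcal L}}}$, the algorithm being SP-FW; or (P) $\mathcal X=\mathrm{conv}(\mathcal A)$, $\mathcal Y=\mathrm{conv}(\mathcal B)$ with $\mathcal A,\mathcal B$ finite, $\mu^A_{\mathcal L}>0$, with $(g_t,\nu,\mu_{\mathcal L}):=(g_t^{PFW},\nu^{PFW},\mu^A_{\mathcal L})$, $\nu^{PFW}:=\frac12-\frac{M_{\mathcal L}}{\sqrt{\mu^A_{\mathcal L}}}$, the algorithm being SP-AFW. Let $w_t:=w(z^{(t)})$ for the iterates of the algorithm with step size $\gamma_t=\min(\gamma_{\max},\frac{\nu}{2C_{\mathcal L}}g_t)$. If $\nu>0$, then at each non-drop step (i.e. when $\gamma_t<\gamma_{\max}$ or $\gamma_{\max}\ge1$), $$w_{t+1}\le(1-\rho_{\mathcal L})w_t,\qquad\rho_{\mathcal L}:=\frac{\nu^2}2\frac{\mu_{\mathcal L}}{C_{\mathcal L}}.$$ Moreover, in case (I) there is no drop step; in case (P) the number of drop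 steps (steps with $\gamma_t=\gamma_{\max}<1$) among the first $t$ iterations is at most $\frac23t$, and at a drop step $w_{t+1}\le w_t$.
   Context: Convex-concave: $\mathcal L(\cdot,y)$ convex, $\mathcal L(x,\cdot)$ concave. Uniformly strongly convex-concave: there are $\mu_{\mathcal X},\mu_{\mathcal Y}>0$ with $\mathcal L(\cdot,y)$ $\mu_{\mathcal X}$-strongly convex for every $y$ and $-\mathcal L(x,\cdot)$ $\mu_{\mathcal Y}$-strongly convex for every $x$. Saddle point: $\mathcal L(x^*,y)\le\mathcal L(x^*,y^* )\le\mathcal L(x,y^* )$ for all $x,y$; $\mathcal L^*:=\mathcal L(x^*,y^* )$. For $z=(x,y)$: $r(z):=(\nabla_x\mathcal L(z),-\nabla_y\mathcal L(z))$, $w(z):=\mathcal L(x,y^* )-\mathcal L(x^*,y)$. Algorithms. SP-FW: from $z^{(0)}$, at iteration $t$: $r^{(t)}:=r(z^{(t)})$, $s^{(t)}\in\arg\min_{s\in\mathcal X\times\mathcal Y}\langle s,r^{(t)}\rangle$, $g_t^{FW}:=\langle z^{(t)}-s^{(t)},r^{(t)}\rangle$, $z^{(t+1)}:=(1-\gamma_t)z^{(t)}+\gamma_ts^{(t)}$; $\gamma_{\max}:=1$. SP-AFW: iterates stored as $x^{(t)}=\sum_{v\in S_x^{(t)}}\alpha_v^{(t)}v$, $y^{(t)}=\sum_{v\in S_y^{(t)}}\alpha^{(t)}_vv$ (positive weights summing to one, active sets $S_x^{(t)}\subseteq\mathcal A,S_y^{(t)}\subseteq\mathcal B$), starting from $z^{(0)}\in\mathcal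 A\times\mathcal B$ with singleton active sets. At iteration $t$: $d_{FW}^{(t)}:=s^{(t)}-z^{(t)}$; $v^{(t)}=(v^{(t)}_x,v^{(t)}_y)\in\arg\max_{v\in S_x^{(t)}\times S_y^{(t)}}\langle r^{(t)},v\rangle$, $d_A^{(t)}:=z^{(t)}-v^{(t)}$; if $\langle-r^{(t)},d^{(t)}_{FW}\rangle\ge\langle-r^{(t)},d^{(t)}_A\rangle$ then $d^{(t)}:=d^{(t)}_{FW}$, $\gamma_{\max}:=1$, else $d^{(t)}:=d^{(t)}_A$, $\gamma_{\max}:=\min\{\frac{\alpha_{v_x^{(t)}}}{1-\alpha_{v_x^{(t)}}},\frac{\alpha_{v_y^{(t)}}}{1-\alpha_{v_y^{(t)}}}\}$; $g_t^{PFW}:=\langle-r^{(t)},d^{(t)}_{FW}+d^{(t)}_A\rangle$; $z^{(t+1)}:=z^{(t)}+\gamma_td^{(t)}$, weights of each block updated accordingly (FW step: multiply by $1-\gamma_t$, add $\gamma_t$ to the FW vertex; away step: multiply by $1+\gamma_t$, subtract $\gamma_t$ from the away vertex), active sets = atoms of positive weight. Constants. $\mathcal F:=\{\mathcal L(\cdot,y):y\in\mathcal Y\}$, $\mathcal G:=\{-\mathcal L(x,\cdot):x\in\mathcal X\}$. Curvature: $C_f:=\sup\frac2{\gamma^2}(f(x+\gamma(s-v))-f(x)-\gamma\langle s-v,\nabla f(x)\rangle)$ over $x,s,v$ in the domain, $\gamma>0$ with $x+\gamma(s-v)$ in the domain; $C_{\mathcal L}:=\frac12(\sup_{f\in\mathcal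 F}C_f+\sup_{g\in\mathcal G}C_g)$. Interior strong convexity of $f$ on $\mathcal K$ w.r.t. $x_c$ in its relative interior: $\mu_f^{x_c}:=\inf\frac2{\gamma^2}(f(u)-f(x)-\langle u-x,\nabla f(x)\rangle)$ over $x\in\mathcal K\setminus\{x_c\}$, $\gamma\in(0,1]$, $u=x+\gamma(s-x)$ where $s$ is where the ray from $x$ through $x_c$ meets the relative boundary of $\mathcal K$; $\mu^{int}_{\mathcal L}:=\min\{\inf_{f\in\mathcal F}\mu_f^{x^*},\inf_{g\in\mathcal G}\mu_g^{y^*}\}$. Geometric strong convexity of $f$ on $\mathcal K=\mathrm{conv}(\mathcal A)$: for $x\in\mathcal K$, $\mathcal S_x$ = family of $S\subseteq\mathcal A$ such that $x$ is a convex combination of all elements of $S$ with positive coefficients, $v_S(x)\in\arg\max_{v\in S}\langle\nabla f(x),v\rangle$, $v_f(x)\in\arg\min\{\langle\nabla f(x),v\rangle:v=v_S(x),S\in\mathcal S_x\}$, $s_f(x)\in\arg\min_{v\in\mathcal A}\langle\nabla f(x),v\rangle$, $\gamma^A(x,x'):=\frac{\langle-\nabla f(x),x'-x\rangle}{\langle-\nabla f(x),s_f(x)-v_f(x)\rangle}$, $\mu^A_f:=\inf_{x\in\mathcal K}\inf_{x':\langle\nabla f(x),x'-x\rangle<0}\frac2{\gamma^A(x,x')^2}(f(x')-f(x)-\langle x'-x,\nabla f(x)\rangle)$; $\mu^A_{\mathcal L}:=\min\{\inf_{f\in\mathcal F}\mu^A_f\text{ (over }\mathcal A),\inf_{g\in\mathcal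 G}\mu^A_g\text{ (over }\mathcal B)\}$. Bilinearity: $M_{XY}:=\sup\langle s-v,\frac{\nabla_x\mathcal L(x,y^* )-\nabla_x\mathcal L(x,y)}{\sqrt{\mathcal L^*-\mathcal L(x^*,y)}}\rangle$ over $y\ne y^*$, $x,s,v\in\mathcal X$; $M_{YX}:=\sup\langle s-v,\frac{\nabla_y\mathcal L(x,y)-\nabla_y\mathcal L(x^*,y)}{\sqrt{\mathcal L(x,y^* )-\mathcal L^*}}\rangle$ over $x\ne x^*$, $y,s,v\in\mathcal Y$; $M_{\mathcal L}:=\max\{M_{XY},M_{YX}\}$. *)

theory Defs
  imports "HOL-Analysis.Analysis"
begin

definition sconvex_on :: "real \<Rightarrow> 'a::real_normed_vector set \<Rightarrow> ('a \<Rightarrow> real) \<Rightarrow> bool" where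
  "sconvex_on \<mu> C f \<longleftrightarrow> (\<forall>x\<in>C. \<forall>y\<in>C. \<forall>t::real. 0 \<le> t \<and> t \<le> 1 \<longrightarrow>
      f ((1 - t) *\<^sub>R x + t *\<^sub>R y) \<le> (1 - t) * f x + t * f y - \<mu> / 2 * t * (1 - t) * (norm (x - y))\<^sup>2)"

section \<open>Saddle-point objects: z = (x,y), gradient grad z = (nabla_x L z, nabla_y L z)\<close>

definition sp_r :: "('a \<times> 'b \<Rightarrow> 'a \<times> 'b) \<Rightarrow> 'a \<times> 'b \<Rightarrow> ('a::real_vector) \<times> ('b::real_vector)" where
  "sp_r grad z = (fst (grad z), - snd (grad z))"

definition sp_w :: "('a \<times> 'b \<Rightarrow> real) \<Rightarrow> 'a \<Rightarrow> 'b \<Rightarrow> 'a \<times> 'b \<Rightarrow> real" where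
  "sp_w L xs ys z = L (fst z, ys) - L (xs, snd z)"

definition curv_set :: "('a::real_inner \<Rightarrow> real) \<Rightarrow> ('a \<Rightarrow> 'a) \<Rightarrow> 'a set \<Rightarrow> real set" where
  "curv_set f df D = {2 / \<gamma>\<^sup>2 * (f (x + \<gamma> *\<^sub>R (s - v)) - f x - \<gamma> * inner (s - v) (df x)) | x s v \<gamma>.
      x \<in> D \<and> s \<in> D \<and> v \<in> D \<and> \<gamma> > 0 \<and> x + \<gamma> *\<^sub>R (s - v) \<in> D}"

definition curv :: "('a::real_inner \<Rightarrow> real) \<Rightarrow> ('a \<Rightarrow> 'a) \<Rightarrow> 'a set \<Rightarrow> real" where
  "curv f df D = Sup (curv_set f df D)"

definition C_L :: "'a::real_inner set \<Rightarrow> 'b::real_inner set \<Rightarrow> ('a \<times> 'b \<Rightarrow> real) \<Rightarrow> ('a \<times> 'b \<Rightarrow> 'a \<times> 'b) \<Rightarrow> real" where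
  "C_L X Y L grad = ((SUP y\<in>Y. curv (\<lambda>x. L (x, y)) (\<lambda>x. fst (grad (x, y))) X)
                   + (SUP x\<in>X. curv (\<lambda>y. - L (x, y)) (\<lambda>y. - snd (grad (x, y))) Y)) / 2"

definition ray_exit :: "'a::real_vector set \<Rightarrow> 'a \<Rightarrow> 'a \<Rightarrow> 'a" where
  "ray_exit K x xc = x + (Sup {l::real. 0 \<le> l \<and> x + l *\<^sub>R (xc - x) \<in> K}) *\<^sub>R (xc - x)"

definition int_sc_set :: "('a::real_inner \<Rightarrow> real) \<Rightarrow> ('a \<Rightarrow> 'a) \<Rightarrow> 'a set \<Rightarrow> 'a \<Rightarrow> real set" where
  "int_sc_set f df K xc = {2 / \<gamma>\<^sup>2 * (f u - f x - inner (u - x) (df x)) | x \<gamma> u.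
      x \<in> K \<and> x \<noteq> xc \<and> 0 < \<gamma> \<and> \<gamma> \<le> 1 \<and> u = x + \<gamma> *\<^sub>R (ray_exit K x xc - x)}"

definition mu_int :: "('a::real_inner \<Rightarrow> real) \<Rightarrow> ('a \<Rightarrow> 'a) \<Rightarrow> 'a set \<Rightarrow> 'a \<Rightarrow> real" where
  "mu_int f df K xc = Inf (int_sc_set f df K xc)"

definition mu_int_L :: "'a::real_inner set \<Rightarrow> 'b::real_inner set \<Rightarrow> ('a \<times> 'b \<Rightarrow> real) \<Rightarrow> ('a \<times> 'b \<Rightarrow> 'a \<times> 'b) \<Rightarrow> 'a \<Rightarrow> 'b \<Rightarrow> real" where
  "mu_int_L X Y L grad xs ys = min (INF y\<in>Y. mu_int (\<lambda>x. L (x, y)) (\<lambda>x. fst (grad (x, y))) X xs)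
                                   (INF x\<in>X. mu_int (\<lambda>y. - L (x, y)) (\<lambda>y. - snd (grad (x, y))) Y ys)"

definition atom_supports :: "'a::real_vector set \<Rightarrow> 'a \<Rightarrow> 'a set set" where
  "atom_supports A x = {S. S \<subseteq> A \<and> (\<exists>\<alpha>. (\<forall>v\<in>S. \<alpha> v > 0) \<and> sum \<alpha> S = 1 \<and> (\<Sum>v\<in>S. \<alpha> v *\<^sub>R v) = x)}"

text \<open>inner g (v_f x) = min over S in S_x of max over v in S of inner g v.\<close>
definition away_val :: "'a::real_inner \<Rightarrow> 'a set \<Rightarrow> 'a \<Rightarrow> real" where
  "away_val g A x = Min ((\<lambda>S. Max ((\<lambda>v. inner g v) ` S)) ` atom_supports A x)"

text \<open>inner g (s_f x) = min over v in A of inner g v.\<close>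
definition fw_val :: "'a::real_inner \<Rightarrow> 'a set \<Rightarrow> real" where
  "fw_val g A = Min ((\<lambda>v. inner g v) ` A)"

definition gammaA :: "('a::real_inner \<Rightarrow> 'a) \<Rightarrow> 'a set \<Rightarrow> 'a \<Rightarrow> 'a \<Rightarrow> real" where
  "gammaA df A x x' = inner (- df x) (x' - x) / (away_val (df x) A x - fw_val (df x) A)"

definition geo_sc_set :: "('a::real_inner \<Rightarrow> real) \<Rightarrow> ('a \<Rightarrow> 'a) \<Rightarrow> 'a set \<Rightarrow> real set" where
  "geo_sc_set f df A = {2 / (gammaA df A x x')\<^sup>2 * (f x' - f x - inner (x' - x) (df x)) | x x'.
      x \<in> convex hull A \<and> x' \<in> convex hull A \<and> inner (df x) (x' - x) < 0}"

definition mu_geo :: "('a::real_inner \<Rightarrow> real) \<Rightarrow> ('a \<Rightarrow> 'a) \<Rightarrow> 'a set \<Rightarrow> real" where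
  "mu_geo f df A = Inf (geo_sc_set f df A)"

definition mu_geo_L :: "'a::real_inner set \<Rightarrow> 'b::real_inner set \<Rightarrow> ('a \<times> 'b \<Rightarrow> real) \<Rightarrow> ('a \<times> 'b \<Rightarrow> 'a \<times> 'b) \<Rightarrow> real" where
  "mu_geo_L A B L grad = min (INF y\<in>convex hull B. mu_geo (\<lambda>x. L (x, y)) (\<lambda>x. fst (grad (x, y))) A)
                             (INF x\<in>convex hull A. mu_geo (\<lambda>y. - L (x, y)) (\<lambda>y. - snd (grad (x, y))) B)"

definition MXY_set :: "'a::real_inner set \<Rightarrow> 'b::real_inner set \<Rightarrow> ('a \<times> 'b \<Rightarrow> real) \<Rightarrow> ('a \<times> 'b \<Rightarrow> 'a \<times> 'b) \<Rightarrow> 'a \<Rightarrow> 'b \<Rightarrow> real set" where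
  "MXY_set X Y L grad xs ys = {inner (s - v) ((fst (grad (x, ys)) - fst (grad (x, y))) /\<^sub>R sqrt (L (xs, ys) - L (xs, y)))
      | y x s v. y \<in> Y \<and> y \<noteq> ys \<and> x \<in> X \<and> s \<in> X \<and> v \<in> X}"

definition MYX_set :: "'a::real_inner set \<Rightarrow> 'b::real_inner set \<Rightarrow> ('a \<times> 'b \<Rightarrow> real) \<Rightarrow> ('a \<times> 'b \<Rightarrow> 'a \<times> 'b) \<Rightarrow> 'a \<Rightarrow> 'b \<Rightarrow> real set" where
  "MYX_set X Y L grad xs ys = {inner (s - v) ((snd (grad (x, y)) - snd (grad (xs, y))) /\<^sub>R sqrt (L (x, ys) - L (xs, ys)))
      | x y s v. x \<in> X \<and> x \<noteq> xs \<and> y \<in> Y \<and> s \<in> Y \<and> v \<in> Y}"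

definition M_L :: "'a::real_inner set \<Rightarrow> 'b::real_inner set \<Rightarrow> ('a \<times> 'b \<Rightarrow> real) \<Rightarrow> ('a \<times> 'b \<Rightarrow> 'a \<times> 'b) \<Rightarrow> 'a \<Rightarrow> 'b \<Rightarrow> real" where
  "M_L X Y L grad xs ys = max (Sup (MXY_set X Y L grad xs ys)) (Sup (MYX_set X Y L grad xs ys))"

definition spfw_run :: "'a::real_inner set \<Rightarrow> 'b::real_inner set \<Rightarrow> ('a \<times> 'b \<Rightarrow> 'a \<times> 'b) \<Rightarrow> real \<Rightarrow> real
    \<Rightarrow> (nat \<Rightarrow> 'a \<times> 'b) \<Rightarrow> (nat \<Rightarrow> 'a \<times> 'b) \<Rightarrow> bool" where
  "spfw_run X Y grad \<nu> C z s \<longleftrightarrow> z 0 \<in> X \<times> Y \<and>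
     (\<forall>t. let r = sp_r grad (z t);
              g = inner (z t - s t) r;
              \<gamma> = min 1 (\<nu> / (2 * C) * g)
          in s t \<in> X \<times> Y \<and> (\<forall>s'\<in>X \<times> Y. inner (s t) r \<le> inner s' r) \<and>
             z (Suc t) = (1 - \<gamma>) *\<^sub>R z t + \<gamma> *\<^sub>R s t)"

definition away_ratio :: "real \<Rightarrow> ereal" where
  "away_ratio a = (if a < 1 then ereal (a / (1 - a)) else \<infinity>)"

text \<open>SP-AFW run: z iterates, ax/ay weights, s FW vertex, v away vertex, gam step size,
  gmax maximal step size.\<close>
definition spafw_run :: "'a::real_inner set \<Rightarrow> 'b::real_inner set \<Rightarrow> ('a \<times> 'b \<Rightarrow> 'a \<times> 'b) \<Rightarrow> real \<Rightarrow> real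
    \<Rightarrow> (nat \<Rightarrow> 'a \<times> 'b) \<Rightarrow> (nat \<Rightarrow> 'a \<Rightarrow> real) \<Rightarrow> (nat \<Rightarrow> 'b \<Rightarrow> real)
    \<Rightarrow> (nat \<Rightarrow> 'a \<times> 'b) \<Rightarrow> (nat \<Rightarrow> 'a \<times> 'b) \<Rightarrow> (nat \<Rightarrow> real) \<Rightarrow> (nat \<Rightarrow> real) \<Rightarrow> bool" where
  "spafw_run A B grad \<nu> C z ax ay s v gam gmax \<longleftrightarrow>
     fst (z 0) \<in> A \<and> snd (z 0) \<in> B \<and>
     ax 0 = (\<lambda>a. if a = fst (z 0) then 1 else 0) \<and>
     ay 0 = (\<lambda>b. if b = snd (z 0) then 1 else 0) \<and>
     (\<forall>t. let r = sp_r grad (z t);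
              Sx = {a\<in>A. ax t a > 0};
              Sy = {b\<in>B. ay t b > 0};
              dFW = s t - z t;
              dA = z t - v t;
              isFW = (inner (- r) dFW \<ge> inner (- r) dA);
              g = inner (- r) (dFW + dA)
          in s t \<in> A \<times> B \<and> (\<forall>s'\<in>(convex hull A) \<times> (convex hull B). inner (s t) r \<le> inner s' r) \<and>
             v t \<in> Sx \<times> Sy \<and> (\<forall>v'\<in>Sx \<times> Sy. inner r v' \<le> inner r (v t)) \<and>
             gmax t = (if isFW then 1
                       else real_of_ereal (min (away_ratio (ax t (fst (v t)))) (away_ratio (ay t (snd (v t)))))) \<and>
             gam t = min (gmax t) (\<nu> / (2 * C) * g) \<and>
             z (Suc t) = z t + gam t *\<^sub>R (if isFW then dFW else dA) \<and>
             ax (Suc t) = (if isFW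
                           then (\<lambda>a. (1 - gam t) * ax t a + (if a = fst (s t) then gam t else 0))
                           else (\<lambda>a. (1 + gam t) * ax t a - (if a = fst (v t) then gam t else 0))) \<and>
             ay (Suc t) = (if isFW
                           then (\<lambda>b. (1 - gam t) * ay t b + (if b = snd (s t) then gam t else 0))
                           else (\<lambda>b. (1 + gam t) * ay t b - (if b = snd (v t) then gam t else 0))))"

end

theory Submission
  imports Defs
begin

text \<open>
  Along a step \<open>z' = z + \<gamma> (p - q)\<close> the curvature constant gives
  \<open>w(z') \<le> w(z) - \<gamma> \<langle>r(z), q - p\<rangle> + \<gamma> M (\<surd>(L(x,y\<^sup>*) - L\<^sup>*) + \<surd>(L\<^sup>* - L(x\<^sup>*,y))) + \<gamma>\<^sup>2 C\<close>,
  where the bilinearity constant \<open>M\<close> pays for evaluating the partial gradients at \<open>(x,y\<^sup>*)\<close>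
  and \<open>(x\<^sup>*,y)\<close> instead of \<open>(x,y)\<close>. Interior (resp. geometric) strong convexity yields
  \<open>w(z) \<le> c g - c\<^sup>2 \<mu> / 2\<close> for some \<open>c \<in> [0,1]\<close>, where \<open>g\<close> is the Frank-Wolfe (resp.
  pairwise) gap. Hence \<open>2 \<mu> w(z) \<le> g\<^sup>2\<close>, the square roots add up to at most \<open>g / \<surd>\<mu>\<close>,
  and \<open>w(z') \<le> w(z) - \<nu> \<gamma> g + \<gamma>\<^sup>2 C\<close>; the step size \<open>\<gamma> = \<nu> g / (2 C)\<close> then gives the factor
  \<open>1 - \<nu>\<^sup>2 \<mu> / (2 C)\<close>, and a step truncated at a maximal length \<open>\<ge> 1\<close> does no worse.
  In SP-AFW a drop step removes an atom from an active set while no step adds more than two,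
  so at most two thirds of the steps are drop steps.
\<close>

section \<open>Scalar inequalities\<close>

lemma contraction_of_short_step:
  fixes w w' g \<nu> C \<mu> \<gamma> :: real
  assumes C: "C > 0" and step: "w' \<le> w - \<nu> * \<gamma> * g + \<gamma>\<^sup>2 * C"
    and \<gamma>: "\<gamma> = \<nu> / (2 * C) * g" and gap: "2 * \<mu> * w \<le> g\<^sup>2"
  shows "w' \<le> (1 - \<nu>\<^sup>2 / 2 * (\<mu> / C)) * w"
proof -
  define \<rho> where "\<rho> = \<nu>\<^sup>2 / 2 * (\<mu> / C)"
  have "\<nu> * \<gamma> * g - \<gamma>\<^sup>2 * C = \<nu>\<^sup>2 * g\<^sup>2 / (4 * C)"
    unfolding \<gamma> using C by (simp add: field_simps power2_eq_square)
  moreover have "\<rho> * w = \<nu>\<^sup>2 * (2 * \<mu> * w) / (4 * C)"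
    unfolding \<rho>_def using C by (simp add: field_simps)
  moreover have "\<nu>\<^sup>2 * (2 * \<mu> * w) / (4 * C) \<le> \<nu>\<^sup>2 * g\<^sup>2 / (4 * C)"
    using C gap by (intro divide_right_mono mult_left_mono) auto
  moreover have "(1 - \<rho>) * w = w - \<rho> * w"
    by (simp add: left_diff_distrib)
  ultimately show ?thesis
    using step unfolding \<rho>_def[symmetric] by linarith
qed

lemma contraction_of_full_step:
  fixes w w' g \<nu> C \<mu> c :: real
  assumes C: "C > 0" and \<nu>: "0 < \<nu>" "\<nu> \<le> 1" and \<mu>: "0 \<le> \<mu>" "\<mu> \<le> 2 * C" and c: "0 \<le> c" "c \<le> 1"
    and gap: "w \<le> c * g - c\<^sup>2 * \<mu> / 2" and full: "2 * C \<le> \<nu> * g" and step: "w' \<le> w - \<nu> * g + C"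
  shows "w' \<le> (1 - \<nu>\<^sup>2 / 2 * (\<mu> / C)) * w"
proof -
  define \<rho> where "\<rho> = \<nu>\<^sup>2 / 2 * (\<mu> / C)"
  define q where "q = \<nu> * \<mu> * c"
  have "q \<le> 1 * \<mu> * 1"
    unfolding q_def using \<nu> \<mu> c by (intro mult_mono) auto
  hence "2 * C * (2 * C - q) \<le> \<nu> * g * (2 * C - q)"
    using full \<mu> by (intro mult_right_mono) auto
  hence "4 * C * C - 2 * C * q \<le> 2 * C * \<nu> * g - \<nu> * g * q"
    by (simp add: algebra_simps)
  moreover have "0 \<le> 4 * C * C - 4 * C * q + q * q"
    using zero_le_power2[of "2 * C - q"] by (simp add: power2_eq_square algebra_simps)
  ultimately have "\<nu> * g * q - q * q / 2 \<le> 2 * C * \<nu> * g - 2 * C * C"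
    by linarith
  hence "\<nu> * g * q - q\<^sup>2 / 2 \<le> 2 * C * (\<nu> * g - C)"
    by (simp add: power2_eq_square right_diff_distrib)
  moreover have "2 * C * (\<rho> * (c * g - c\<^sup>2 * \<mu> / 2)) = \<nu> * g * q - q\<^sup>2 / 2"
    unfolding \<rho>_def q_def using C by (simp add: field_simps power2_eq_square)
  ultimately have "2 * C * (\<rho> * (c * g - c\<^sup>2 * \<mu> / 2)) \<le> 2 * C * (\<nu> * g - C)"
    by simp
  hence "\<rho> * (c * g - c\<^sup>2 * \<mu> / 2) \<le> \<nu> * g - C"
    by (rule mult_left_le_imp_le) (use C in auto)
  moreover have "\<rho> * w \<le> \<rho> * (c * g - c\<^sup>2 * \<mu> / 2)"
    unfolding \<rho>_def using gap C \<mu> by (intro mult_left_mono) auto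
  moreover have "(1 - \<rho>) * w = w - \<rho> * w"
    by (simp add: left_diff_distrib)
  ultimately show ?thesis
    using step unfolding \<rho>_def[symmetric] by linarith
qed

lemma contraction_of_long_step:
  fixes w w' g \<nu> C \<mu> c \<gamma> :: real
  assumes C: "C > 0" and \<nu>: "0 < \<nu>" "\<nu> \<le> 1/2" and \<mu>: "0 \<le> \<mu>" "\<mu> \<le> 2 * C" and c: "0 \<le> c" "c \<le> 1"
    and gap: "w \<le> c * g - c\<^sup>2 * \<mu> / 2" and \<gamma>: "1 \<le> \<gamma>" "\<gamma> \<le> \<nu> / (2 * C) * g" and g: "0 \<le> g"
    and step: "w' \<le> w - \<nu> * \<gamma> * g + \<gamma>\<^sup>2 * C"
  shows "w' \<le> (1 - \<nu>\<^sup>2 / 2 * (\<mu> / C)) * w"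
proof -
  define \<rho> where "\<rho> = \<nu>\<^sup>2 / 2 * (\<mu> / C)"
  have "\<gamma> * C \<le> \<nu> * g / 2"
    using \<gamma>(2) C by (simp add: field_simps)
  hence "\<gamma>\<^sup>2 * C \<le> \<gamma> * (\<nu> * g / 2)"
    using \<gamma>(1) mult_left_mono[of "\<gamma> * C" "\<nu> * g / 2" \<gamma>] by (simp add: power2_eq_square algebra_simps)
  moreover have "1 * (\<nu> * g / 2) \<le> \<gamma> * (\<nu> * g / 2)"
    using \<gamma>(1) \<nu> g by (intro mult_right_mono) auto
  ultimately have half: "w' \<le> w - \<nu> * g / 2"
    using step by (simp add: algebra_simps)
  have "\<nu> * \<mu> * c \<le> (1/2) * (2 * C) * 1"
    using \<nu> \<mu> c by (intro mult_mono) auto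
  hence "\<nu> * g * (\<nu> * \<mu> * c) / (2 * C) \<le> \<nu> * g * C / (2 * C)"
    using \<nu> g C by (intro divide_right_mono mult_left_mono) auto
  moreover have "\<rho> * (c * g) = \<nu> * g * (\<nu> * \<mu> * c) / (2 * C)"
    unfolding \<rho>_def using C by (simp add: field_simps power2_eq_square)
  ultimately have "\<rho> * (c * g) \<le> \<nu> * g / 2"
    using C by simp
  moreover have "\<rho> * w \<le> \<rho> * (c * g - c\<^sup>2 * \<mu> / 2)"
    unfolding \<rho>_def using gap C \<mu> by (intro mult_left_mono) auto
  moreover have "0 \<le> \<rho> * (c\<^sup>2 * \<mu> / 2)"
    unfolding \<rho>_def using C \<mu> by simp
  moreover have "(1 - \<rho>) * w = w - \<rho> * w"
    by (simp add: left_diff_distrib)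
  ultimately show ?thesis
    using half unfolding \<rho>_def[symmetric] by (simp add: right_diff_distrib)
qed

lemma nonincrease_of_step:
  fixes w w' g \<nu> C \<gamma> :: real
  assumes C: "C > 0" and \<gamma>: "0 \<le> \<gamma>" "\<gamma> \<le> \<nu> / (2 * C) * g" and \<nu>: "0 \<le> \<nu>" and g: "0 \<le> g"
    and step: "w' \<le> w - \<nu> * \<gamma> * g + \<gamma>\<^sup>2 * C"
  shows "w' \<le> w"
proof -
  have "\<gamma> * C \<le> \<nu> * g / 2"
    using \<gamma>(2) C by (simp add: field_simps)
  hence "\<gamma>\<^sup>2 * C \<le> \<gamma> * (\<nu> * g / 2)"
    using \<gamma>(1) mult_left_mono[of "\<gamma> * C" "\<nu> * g / 2" \<gamma>] by (simp add: power2_eq_square algebra_simps)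
  moreover have "0 \<le> \<gamma> * (\<nu> * g / 2)"
    using \<gamma>(1) \<nu> g by simp
  ultimately show ?thesis
    using step by (simp add: algebra_simps)
qed

lemma quadratic_gap_le_square:
  fixes c g \<mu> :: real
  assumes "0 < \<mu>"
  shows "2 * \<mu> * (c * g - c\<^sup>2 * \<mu> / 2) \<le> g\<^sup>2"
  using zero_le_power2[of "g - c * \<mu>"] by (simp add: power2_eq_square algebra_simps)

lemma sqrt_add_mult_sqrt_le:
  fixes a b g \<mu> :: real
  assumes "0 \<le> a" "0 \<le> b" "0 \<le> g" "0 < \<mu>" and gap: "2 * \<mu> * (a + b) \<le> g\<^sup>2"
  shows "(sqrt a + sqrt b) * sqrt \<mu> \<le> g"
proof (rule power2_le_imp_le)
  have "(sqrt a + sqrt b)\<^sup>2 \<le> 2 * (a + b)"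
    using zero_le_power2[of "sqrt a - sqrt b"] assms(1,2) by (simp add: power2_eq_square algebra_simps)
  hence "(sqrt a + sqrt b)\<^sup>2 * \<mu> \<le> 2 * (a + b) * \<mu>"
    using assms(4) by (intro mult_right_mono) auto
  moreover have "((sqrt a + sqrt b) * sqrt \<mu>)\<^sup>2 = (sqrt a + sqrt b)\<^sup>2 * \<mu>"
    using assms(4) by (simp add: power_mult_distrib)
  ultimately show "((sqrt a + sqrt b) * sqrt \<mu>)\<^sup>2 \<le> g\<^sup>2"
    using gap by (simp add: algebra_simps)
qed (use assms in auto)

lemma quadratic_gap_bound_add:
  fixes a b g g' \<mu> c c' :: real
  assumes "0 \<le> g" "0 \<le> g'" "0 \<le> \<mu>" "0 \<le> c" "c \<le> 1" "0 \<le> c'" "c' \<le> 1"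
    and "a \<le> c * g - c\<^sup>2 * \<mu> / 2" "b \<le> c' * g' - c'\<^sup>2 * \<mu> / 2"
  shows "\<exists>c''. 0 \<le> c'' \<and> c'' \<le> 1 \<and> a + b \<le> c'' * (g + g') - c''\<^sup>2 * \<mu> / 2"
proof (cases "c \<le> c'")
  case True
  hence "c * g \<le> c' * g"
    using assms(1) by (rule mult_right_mono)
  moreover have "0 \<le> c\<^sup>2 * \<mu>"
    using assms(3) by simp
  ultimately have "a + b \<le> c' * (g + g') - c'\<^sup>2 * \<mu> / 2"
    using assms(8,9) by (simp add: algebra_simps)
  thus ?thesis using assms(6,7) by blast
next
  case False
  hence "c' * g' \<le> c * g'"
    using assms(2) by (intro mult_right_mono) auto
  moreover have "0 \<le> c'\<^sup>2 * \<mu>"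
    using assms(3) by simp
  ultimately have "a + b \<le> c * (g + g') - c\<^sup>2 * \<mu> / 2"
    using assms(8,9) by (simp add: algebra_simps)
  thus ?thesis using assms(4,5) by blast
qed

section \<open>Infima and suprema of families of sets\<close>

text \<open>Members with empty \<open>S p\<close> contribute the unspecified reals \<open>Inf {}\<close> and \<open>Sup {}\<close>,
  hence the bounds \<open>min B (Inf {})\<close> and \<open>max B (Sup {})\<close> below.\<close>

lemma INF_Inf_le_of_mem:
  fixes S :: "'p \<Rightarrow> real set"
  assumes bdd: "bdd_below (\<Union>p\<in>P. S p)" and p: "p \<in> P" and e: "e \<in> S p"
  shows "(INF p\<in>P. Inf (S p)) \<le> e"
proof -
  obtain B where B: "\<And>u. u \<in> (\<Union>p\<in>P. S p) \<Longrightarrow> B \<le> u"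
    using bdd by (auto simp: bdd_below_def)
  have "bdd_below ((\<lambda>p. Inf (S p)) ` P)"
  proof (rule bdd_belowI[of _ "min B (Inf {})"])
    fix u assume "u \<in> (\<lambda>p. Inf (S p)) ` P"
    then obtain q where q: "q \<in> P" "u = Inf (S q)" by auto
    show "min B (Inf {}) \<le> u"
    proof (cases "S q = {}")
      case False
      hence "B \<le> u"
        unfolding q(2) by (intro cInf_greatest) (use B q in auto)
      thus ?thesis by simp
    qed (use q in simp)
  qed
  hence "(INF p\<in>P. Inf (S p)) \<le> Inf (S p)"
    by (rule cINF_lower[OF _ p])
  also have "Inf (S p) \<le> e"
    using e bdd p by (meson UN_upper bdd_below_mono cInf_lower)
  finally show ?thesis .
qed

lemma le_SUP_Sup_of_mem:
  fixes S :: "'p \<Rightarrow> real set"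
  assumes bdd: "bdd_above (\<Union>p\<in>P. S p)" and p: "p \<in> P" and e: "e \<in> S p"
  shows "e \<le> (SUP p\<in>P. Sup (S p))"
proof -
  obtain B where B: "\<And>u. u \<in> (\<Union>p\<in>P. S p) \<Longrightarrow> u \<le> B"
    using bdd by (auto simp: bdd_above_def)
  have "e \<le> Sup (S p)"
    using e bdd p by (meson UN_upper bdd_above_mono cSup_upper)
  also have "bdd_above ((\<lambda>p. Sup (S p)) ` P)"
  proof (rule bdd_aboveI[of _ "max B (Sup {})"])
    fix u assume "u \<in> (\<lambda>p. Sup (S p)) ` P"
    then obtain q where q: "q \<in> P" "u = Sup (S q)" by auto
    show "u \<le> max B (Sup {})"
    proof (cases "S q = {}")
      case False
      hence "u \<le> B"
        unfolding q(2) by (intro cSup_least) (use B q in auto)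
      thus ?thesis by simp
    qed (use q in simp)
  qed
  hence "Sup (S p) \<le> (SUP p\<in>P. Sup (S p))"
    by (rule cSUP_upper[OF p])
  finally show ?thesis .
qed

section \<open>Convexity and curvature\<close>

lemma has_field_derivative_le_secant:
  fixes f :: "real \<Rightarrow> real"
  assumes d: "(f has_field_derivative D) (at 0)"
    and below_chord: "\<And>t. 0 < t \<Longrightarrow> t < 1 \<Longrightarrow> f t \<le> (1 - t) * f 0 + t * f 1"
  shows "D \<le> f 1 - f 0"
proof -
  have "((\<lambda>t. (f t - f 0) / (t - 0)) \<longlongrightarrow> D) (at_right 0)"
    using has_field_derivative_at_within[OF d, of "{0<..}"] unfolding has_field_derivative_iff .
  moreover have "eventually (\<lambda>t. (f t - f 0) / (t - 0) \<le> f 1 - f 0) (at_right 0)"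
    using eventually_at_right_real[of 0 1]
  proof (rule eventually_mono)
    fix t :: real assume t: "t \<in> {0<..<1}"
    hence "f t - f 0 \<le> t * (f 1 - f 0)"
      using below_chord[of t] by (simp add: algebra_simps)
    thus "(f t - f 0) / (t - 0) \<le> f 1 - f 0"
      using t by (simp add: divide_le_eq mult.commute)
  qed simp
  ultimately show ?thesis
    by (rule tendsto_upperbound) simp
qed

lemma sconvex_on_above_tangent:
  fixes f :: "'c::real_inner \<Rightarrow> real"
  assumes sc: "sconvex_on \<mu> K f" and \<mu>: "0 \<le> \<mu>" and x: "x \<in> K" "x' \<in> K"
    and d: "(f has_derivative (\<lambda>h. inner g h)) (at x)"
  shows "f x + inner (x' - x) g \<le> f x'"
proof -
  let ?\<phi> = "\<lambda>t::real. f (x + t *\<^sub>R (x' - x))"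
  have "((\<lambda>t. x + t *\<^sub>R (x' - x)) has_derivative (\<lambda>t. t *\<^sub>R (x' - x))) (at 0)"
    by (auto intro!: derivative_eq_intros)
  moreover have "(f has_derivative (\<lambda>h. inner g h)) (at (x + 0 *\<^sub>R (x' - x)))"
    using d by simp
  ultimately have "(?\<phi> has_derivative (\<lambda>t. inner g (t *\<^sub>R (x' - x)))) (at 0)"
    by (rule has_derivative_compose)
  moreover have "(\<lambda>t. inner g (t *\<^sub>R (x' - x))) = (*) (inner (x' - x) g)"
    by (auto simp: inner_commute)
  ultimately have "(?\<phi> has_field_derivative inner (x' - x) g) (at 0)"
    unfolding has_field_derivative_def by simp
  moreover have "?\<phi> t \<le> (1 - t) * ?\<phi> 0 + t * ?\<phi> 1" if "0 < t" "t < 1" for t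
  proof -
    have "f ((1 - t) *\<^sub>R x + t *\<^sub>R x')
            \<le> (1 - t) * f x + t * f x' - \<mu> / 2 * t * (1 - t) * (norm (x - x'))\<^sup>2"
      using sc x that unfolding sconvex_on_def by auto
    moreover have "0 \<le> \<mu> / 2 * t * (1 - t) * (norm (x - x'))\<^sup>2"
      using \<mu> that by simp
    moreover have "x + t *\<^sub>R (x' - x) = (1 - t) *\<^sub>R x + t *\<^sub>R x'"
      by (simp add: algebra_simps)
    ultimately show ?thesis by simp
  qed
  ultimately have "inner (x' - x) g \<le> ?\<phi> 1 - ?\<phi> 0"
    by (rule has_field_derivative_le_secant)
  thus ?thesis by simp
qed

lemma sconvex_on_minimizer_strict:
  fixes f :: "'c::real_normed_vector \<Rightarrow> real"
  assumes sc: "sconvex_on \<mu> K f" and \<mu>: "0 < \<mu>" and K: "convex K"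
    and xc: "xc \<in> K" "\<forall>x\<in>K. f xc \<le> f x" and x: "x \<in> K" "x \<noteq> xc"
  shows "f xc < f x"
proof -
  let ?m = "(1 - 1/2) *\<^sub>R xc + (1/2::real) *\<^sub>R x"
  have "f ?m \<le> (1 - 1/2) * f xc + 1/2 * f x - \<mu> / 2 * (1/2) * (1 - 1/2) * (norm (xc - x))\<^sup>2"
    using sc xc(1) x(1) unfolding sconvex_on_def
    by (elim ballE[of _ _ xc] ballE[of _ _ x] allE[of _ "1/2"]) auto
  moreover have "?m \<in> K"
    using K xc(1) x(1) by (intro convexD) auto
  hence "f xc \<le> f ?m"
    using xc(2) by blast
  moreover have "0 < \<mu> / 2 * (1/2) * (1 - 1/2) * (norm (xc - x))\<^sup>2"
    using \<mu> x(2) by simp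
  ultimately show ?thesis by argo
qed

lemma zero_mem_curv_set:
  assumes "x \<in> D"
  shows "0 \<in> curv_set f df D"
proof -
  have "2 / 1\<^sup>2 * (f (x + 1 *\<^sub>R (x - x)) - f x - 1 * inner (x - x) (df x)) \<in> curv_set f df D"
    unfolding curv_set_def using assms by (intro CollectI exI[of _ x] exI[of _ "1::real"]) auto
  thus ?thesis by simp
qed

lemma curv_SUP_nonneg:
  fixes F :: "'p \<Rightarrow> 'c::real_inner \<Rightarrow> real"
  assumes "bdd_above (\<Union>p\<in>P. curv_set (F p) (dF p) K)" "p \<in> P" "x \<in> K"
  shows "0 \<le> (SUP p\<in>P. curv (F p) (dF p) K)"
  unfolding curv_def using assms by (intro le_SUP_Sup_of_mem zero_mem_curv_set)

lemma curv_step_le: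
  fixes F :: "'p \<Rightarrow> 'c::real_inner \<Rightarrow> real"
  assumes bdd: "bdd_above (\<Union>p\<in>P. curv_set (F p) (dF p) K)" and p: "p \<in> P"
    and K: "x \<in> K" "s \<in> K" "v \<in> K" "x + \<gamma> *\<^sub>R (s - v) \<in> K" and \<gamma>: "0 \<le> \<gamma>"
  shows "F p (x + \<gamma> *\<^sub>R (s - v))
           \<le> F p x + \<gamma> * inner (s - v) (dF p x) + \<gamma>\<^sup>2 / 2 * (SUP p\<in>P. curv (F p) (dF p) K)"
proof (cases "\<gamma> = 0")
  case True
  thus ?thesis using curv_SUP_nonneg[OF bdd p K(1)] by simp
next
  case False
  define e where "e = 2 / \<gamma>\<^sup>2 * (F p (x + \<gamma> *\<^sub>R (s - v)) - F p x - \<gamma> * inner (s - v) (dF p x))"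
  have "e \<in> curv_set (F p) (dF p) K"
    unfolding curv_set_def e_def using K \<gamma> False by (intro CollectI exI[of _ x] exI[of _ s] exI[of _ v] exI[of _ \<gamma>]) auto
  hence "e \<le> (SUP p\<in>P. curv (F p) (dF p) K)"
    unfolding curv_def by (rule le_SUP_Sup_of_mem[OF bdd p])
  hence "\<gamma>\<^sup>2 / 2 * e \<le> \<gamma>\<^sup>2 / 2 * (SUP p\<in>P. curv (F p) (dF p) K)"
    by (intro mult_left_mono) auto
  moreover have "\<gamma>\<^sup>2 / 2 * e = F p (x + \<gamma> *\<^sub>R (s - v)) - F p x - \<gamma> * inner (s - v) (dF p x)"
    unfolding e_def using False by simp
  ultimately show ?thesis by linarith
qed

section \<open>Interior strong convexity\<close>

lemma ray_exit_beyond_center: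
  fixes K :: "'c::euclidean_space set"
  assumes K: "compact K" and xc: "xc \<in> K" and x: "x \<in> K" and ne: "x \<noteq> xc"
  shows "\<exists>l\<ge>1. ray_exit K x xc = x + l *\<^sub>R (xc - x) \<and> x + l *\<^sub>R (xc - x) \<in> K"
proof -
  let ?\<Lambda> = "{l::real. 0 \<le> l \<and> x + l *\<^sub>R (xc - x) \<in> K}"
  have one: "1 \<in> ?\<Lambda>"
    using xc by simp
  obtain R where R: "\<And>k. k \<in> K \<Longrightarrow> norm k \<le> R"
    using compact_imp_bounded[OF K] bounded_iff by blast
  have bdd: "bdd_above ?\<Lambda>"
  proof (rule bdd_aboveI[of _ "(R + norm x) / norm (xc - x)"])
    fix l assume l: "l \<in> ?\<Lambda>"
    have "l * norm (xc - x) = norm ((x + l *\<^sub>R (xc - x)) - x)"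
      using l by simp
    also have "\<dots> \<le> norm (x + l *\<^sub>R (xc - x)) + norm x"
      by (rule norm_triangle_ineq4)
    also have "\<dots> \<le> R + norm x"
      using R l by auto
    finally show "l \<le> (R + norm x) / norm (xc - x)"
      using ne by (simp add: field_simps)
  qed
  have "closed ?\<Lambda>"
  proof -
    have "?\<Lambda> = {0..} \<inter> (\<lambda>l. x + l *\<^sub>R (xc - x)) -` K" by auto
    moreover have "closed ((\<lambda>l. x + l *\<^sub>R (xc - x)) -` K)"
      by (rule continuous_closed_vimage) (auto intro!: continuous_intros compact_imp_closed K)
    ultimately show ?thesis by (auto intro: closed_Int)
  qed
  hence "Sup ?\<Lambda> \<in> ?\<Lambda>"
    using one bdd by (intro closed_contains_Sup) blast+
  moreover have "1 \<le> Sup ?\<Lambda>"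
    using one bdd by (rule cSup_upper)
  ultimately show ?thesis
    unfolding ray_exit_def by auto
qed

text \<open>The center divides the ray from \<open>x\<close> to its exit point, so the quotient defining
  \<open>mu_int\<close> can be evaluated at \<open>u = xc\<close>.\<close>

lemma int_sc_set_memI_ray_exit:
  fixes K :: "'c::euclidean_space set"
  assumes K: "compact K" and xc: "xc \<in> K" and x: "x \<in> K" "x \<noteq> xc"
  obtains c where "0 < c" "c \<le> 1" "ray_exit K x xc \<in> K" "xc = x + c *\<^sub>R (ray_exit K x xc - x)"
    "2 / c\<^sup>2 * (f xc - f x - inner (xc - x) (df x)) \<in> int_sc_set f df K xc"
proof -
  obtain l where l: "l \<ge> 1" "ray_exit K x xc = x + l *\<^sub>R (xc - x)" "x + l *\<^sub>R (xc - x) \<in> K"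
    using ray_exit_beyond_center[OF K xc x] by blast
  define c where "c = 1 / l"
  have c: "0 < c" "c \<le> 1"
    using l(1) unfolding c_def by auto
  have u: "xc = x + c *\<^sub>R (ray_exit K x xc - x)"
    unfolding l(2) c_def using l(1) by (simp add: algebra_simps)
  have "2 / c\<^sup>2 * (f xc - f x - inner (xc - x) (df x)) \<in> int_sc_set f df K xc"
    unfolding int_sc_set_def using x c u by blast
  thus thesis
    using that c l u by simp
qed

lemma int_sc_block_bound:
  fixes F :: "'p \<Rightarrow> 'c::euclidean_space \<Rightarrow> real"
  assumes bdd: "bdd_below (\<Union>p\<in>P. int_sc_set (F p) (dF p) K xc)" and p: "p \<in> P"
    and K: "compact K" and xc: "xc \<in> K" and x: "x \<in> K"
    and lmo: "\<And>a. a \<in> K \<Longrightarrow> inner s (dF p x) \<le> inner a (dF p x)"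
    and m: "m \<le> (INF p\<in>P. mu_int (F p) (dF p) K xc)"
  shows "\<exists>c. 0 \<le> c \<and> c \<le> 1 \<and> F p x - F p xc \<le> c * inner (x - s) (dF p x) - c\<^sup>2 * m / 2"
proof (cases "x = xc")
  case False
  let ?g = "dF p x" and ?e = "ray_exit K x xc"
  obtain c where c: "0 < c" "c \<le> 1" and e: "?e \<in> K" and u: "xc = x + c *\<^sub>R (?e - x)"
    and mem: "2 / c\<^sup>2 * (F p xc - F p x - inner (xc - x) ?g) \<in> int_sc_set (F p) (dF p) K xc"
    using int_sc_set_memI_ray_exit[OF K xc x False] by metis
  have "m \<le> 2 / c\<^sup>2 * (F p xc - F p x - inner (xc - x) ?g)"
    using m INF_Inf_le_of_mem[OF bdd p mem] unfolding mu_int_def by linarith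
  hence "c\<^sup>2 / 2 * m \<le> c\<^sup>2 / 2 * (2 / c\<^sup>2 * (F p xc - F p x - inner (xc - x) ?g))"
    by (rule mult_left_mono) simp
  hence "c\<^sup>2 * m / 2 \<le> F p xc - F p x - inner (xc - x) ?g"
    using c by simp
  moreover have "inner (xc - x) ?g = - (c * inner (x - ?e) ?g)"
    by (subst u) (simp add: inner_diff_left algebra_simps)
  moreover have "c * inner (x - ?e) ?g \<le> c * inner (x - s) ?g"
    using lmo[OF e] c by (intro mult_left_mono) (auto simp: inner_diff_left)
  ultimately have "F p x - F p xc \<le> c * inner (x - s) ?g - c\<^sup>2 * m / 2"
    by linarith
  thus ?thesis
    using c by (intro exI[of _ c]) auto
qed (intro exI[of _ 0]; simp)

lemma mu_int_le_curv:
  fixes F :: "'p \<Rightarrow> 'c::euclidean_space \<Rightarrow> real"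
  assumes bdd: "bdd_below (\<Union>p\<in>P. int_sc_set (F p) (dF p) K xc)"
    and bdd_curv: "bdd_above (\<Union>p\<in>P. curv_set (F p) (dF p) K)"
    and p: "p \<in> P" and K: "compact K" and xc: "xc \<in> K" and x: "x \<in> K" "x \<noteq> xc"
  shows "(INF p\<in>P. mu_int (F p) (dF p) K xc) \<le> (SUP p\<in>P. curv (F p) (dF p) K)"
proof -
  let ?e = "ray_exit K x xc"
  obtain c where c: "0 < c" "c \<le> 1" and e: "?e \<in> K" and u: "xc = x + c *\<^sub>R (?e - x)"
    and mem: "2 / c\<^sup>2 * (F p xc - F p x - inner (xc - x) (dF p x)) \<in> int_sc_set (F p) (dF p) K xc"
    using int_sc_set_memI_ray_exit[OF K xc x] by metis
  have "2 / c\<^sup>2 * (F p (x + c *\<^sub>R (?e - x)) - F p x - c * inner (?e - x) (dF p x))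
          \<in> curv_set (F p) (dF p) K" (is "?k \<in> _")
    unfolding curv_set_def using x(1) e c u xc
    by (intro CollectI exI[of _ x] exI[of _ ?e] exI[of _ x] exI[of _ c]) auto
  moreover have "2 / c\<^sup>2 * (F p xc - F p x - inner (xc - x) (dF p x))
      = 2 / c\<^sup>2 * (F p (x + c *\<^sub>R (?e - x)) - F p x - c * inner (?e - x) (dF p x))"
    by (subst (1 2) u) simp
  ultimately show ?thesis
    using INF_Inf_le_of_mem[OF bdd p mem] le_SUP_Sup_of_mem[OF bdd_curv p, of ?k]
    unfolding mu_int_def curv_def by linarith
qed

section \<open>Geometric strong convexity\<close>

lemma atom_supportsD:
  fixes A :: "'c::real_inner set"
  assumes A: "finite A" and S: "S \<in> atom_supports A x"
  shows "finite S" "S \<noteq> {}" "inner g x \<le> Max ((\<lambda>v. inner g v) ` S)"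
proof -
  obtain \<alpha> where al: "S \<subseteq> A" "\<forall>v\<in>S. \<alpha> v > 0" "sum \<alpha> S = 1" "(\<Sum>v\<in>S. \<alpha> v *\<^sub>R v) = x"
    using S unfolding atom_supports_def by blast
  show fS: "finite S" using al(1) A by (rule finite_subset)
  show ne: "S \<noteq> {}" using al(3) by auto
  have "inner g x = (\<Sum>v\<in>S. \<alpha> v * inner g v)"
    unfolding al(4)[symmetric] by (simp add: inner_sum_right)
  also have "\<dots> \<le> (\<Sum>v\<in>S. \<alpha> v * Max ((\<lambda>v. inner g v) ` S))"
    using al(2) fS by (intro sum_mono mult_left_mono) auto
  also have "\<dots> = Max ((\<lambda>v. inner g v) ` S)" by (simp add: sum_distrib_right[symmetric] al(3))
  finally show "inner g x \<le> Max ((\<lambda>v. inner g v) ` S)" .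
qed

lemma mem_atom_supportsI:
  fixes A :: "'c::real_inner set"
  assumes A: "finite A" and that: "\<forall>a\<in>A. 0 \<le> u a" "sum u A = 1" "(\<Sum>a\<in>A. u a *\<^sub>R a) = x"
  shows "{a\<in>A. 0 < u a} \<in> atom_supports A x"
proof -
  have s1: "sum u {a\<in>A. 0 < u a} = 1"
    using that A by (subst sum.mono_neutral_left[of A]) (auto simp: less_le)
  have s2: "(\<Sum>a\<in>{a\<in>A. 0 < u a}. u a *\<^sub>R a) = x"
    using that A by (subst sum.mono_neutral_left[of A]) (auto simp: less_le)
  show ?thesis unfolding atom_supports_def using s1 s2 by blast
qed

lemma finite_atom_supports:
  assumes "finite A"
  shows "finite (atom_supports A x)"
proof -
  have "atom_supports A x \<subseteq> Pow A"
    unfolding atom_supports_def by auto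
  thus ?thesis
    using assms by (meson finite_Pow_iff finite_subset)
qed

lemma atom_supports_nonempty:
  fixes A :: "'c::real_inner set"
  assumes A: "finite A" and x: "x \<in> convex hull A"
  shows "atom_supports A x \<noteq> {}"
proof -
  obtain u where "\<forall>a\<in>A. 0 \<le> u a" "sum u A = 1" "(\<Sum>a\<in>A. u a *\<^sub>R a) = x"
    using x unfolding convex_hull_finite[OF A] by blast
  thus ?thesis
    using mem_atom_supportsI[OF A] by blast
qed

lemma inner_le_away_val:
  fixes A :: "'c::real_inner set"
  assumes A: "finite A" and x: "x \<in> convex hull A"
  shows "inner g x \<le> away_val g A x"
  unfolding away_val_def using atom_supports_nonempty[OF A x] finite_atom_supports[OF A] atom_supportsD[OF A]
  by (subst Min_ge_iff) auto

lemma away_val_le: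
  fixes A :: "'c::real_inner set"
  assumes A: "finite A" and S: "S \<in> atom_supports A x"
    and v: "v \<in> S" "\<forall>a\<in>S. inner g a \<le> inner g v"
  shows "away_val g A x \<le> inner g v"
proof -
  have "Max ((\<lambda>v. inner g v) ` S) = inner g v"
    using atom_supportsD(1)[OF A S] v by (intro Max_eqI) auto
  moreover have "away_val g A x \<le> Max ((\<lambda>v. inner g v) ` S)"
    unfolding away_val_def using finite_atom_supports[OF A] S by (intro Min_le) auto
  ultimately show ?thesis by simp
qed

lemma fw_val_le_inner:
  fixes A :: "'c::real_inner set"
  assumes A: "finite A" and xc: "xc \<in> convex hull A"
  shows "fw_val g A \<le> inner g xc"
proof -
  obtain u where u: "\<forall>a\<in>A. 0 \<le> u a" "sum u A = 1" "(\<Sum>a\<in>A. u a *\<^sub>R a) = xc"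
    using xc unfolding convex_hull_finite[OF A] by blast
  have ne: "A \<noteq> {}" using u(2) by auto
  have "fw_val g A = (\<Sum>a\<in>A. u a * fw_val g A)" by (simp add: sum_distrib_right[symmetric] u(2))
  also have "\<dots> \<le> (\<Sum>a\<in>A. u a * inner g a)"
    using u(1) A ne unfolding fw_val_def by (intro sum_mono mult_left_mono) auto
  also have "\<dots> = inner g xc" unfolding u(3)[symmetric] by (simp add: inner_sum_right)
  finally show ?thesis .
qed

lemma inner_le_fw_val:
  fixes A :: "'c::real_inner set"
  assumes A: "finite A" "A \<noteq> {}" and lmo: "\<forall>a\<in>A. inner g s \<le> inner g a"
  shows "inner g s \<le> fw_val g A"
  unfolding fw_val_def using A lmo by (subst Min_ge_iff) auto

lemma fw_val_attained:
  fixes A :: "'c::real_inner set"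
  assumes A: "finite A" "A \<noteq> {}"
  shows "\<exists>s\<in>A. fw_val g A = inner g s \<and> (\<forall>a\<in>A. inner g s \<le> inner g a)"
proof -
  have "fw_val g A \<in> (\<lambda>v. inner g v) ` A"
    unfolding fw_val_def using A by (intro Min_in) auto
  then obtain s where s: "s \<in> A" "fw_val g A = inner g s" by auto
  moreover have "\<forall>a\<in>A. inner g s \<le> inner g a"
    using s A unfolding fw_val_def by (metis Min_le finite_imageI image_eqI)
  ultimately show ?thesis by blast
qed

text \<open>Here \<open>c = gammaA x xc\<close>; the pairwise gap at the chosen away and Frank-Wolfe vertices
  dominates the denominator of \<open>gammaA\<close>.\<close>

lemma geo_sc_block_bound:
  fixes F :: "'p \<Rightarrow> 'c::real_inner \<Rightarrow> real"
  assumes A: "finite A" and bdd: "bdd_below (\<Union>p\<in>P. geo_sc_set (F p) (dF p) A)" and p: "p \<in> P"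
    and x: "x \<in> convex hull A" and xc: "xc \<in> convex hull A"
    and m: "m \<le> (INF p\<in>P. mu_geo (F p) (dF p) A)"
    and tangent: "F p x + inner (xc - x) (dF p x) \<le> F p xc"
    and S: "S \<in> atom_supports A x" and v: "v \<in> S" "\<forall>a\<in>S. inner (dF p x) a \<le> inner (dF p x) v"
    and lmo: "\<forall>a\<in>A. inner (dF p x) s \<le> inner (dF p x) a"
  shows "\<exists>c. 0 \<le> c \<and> c \<le> 1 \<and> F p x - F p xc \<le> c * inner (dF p x) (v - s) - c\<^sup>2 * m / 2"
proof (cases "inner (dF p x) (xc - x) < 0")
  case True
  let ?g = "dF p x"
  define D where "D = away_val ?g A x - fw_val ?g A"
  have D_ge: "inner ?g x - inner ?g xc \<le> D"
    unfolding D_def using inner_le_away_val[OF A x, of ?g] fw_val_le_inner[OF A xc, of ?g] by linarith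
  have D_le: "D \<le> inner ?g v - inner ?g s"
    unfolding D_def using away_val_le[OF A S v] inner_le_fw_val[OF A _ lmo] x by fastforce
  define c where "c = inner (- ?g) (xc - x) / D"
  have D_pos: "0 < D"
    using D_ge True by (simp add: inner_diff_right)
  have c: "0 < c" "c \<le> 1"
    unfolding c_def using D_pos True D_ge by (auto simp: inner_diff_right field_simps)
  have "gammaA (dF p) A x xc = c"
    unfolding gammaA_def c_def D_def ..
  hence "2 / c\<^sup>2 * (F p xc - F p x - inner (xc - x) ?g) \<in> geo_sc_set (F p) (dF p) A"
    unfolding geo_sc_set_def using x xc True by (intro CollectI exI[of _ x] exI[of _ xc]) auto
  hence "m \<le> 2 / c\<^sup>2 * (F p xc - F p x - inner (xc - x) ?g)"
    using m INF_Inf_le_of_mem[OF bdd p] unfolding mu_geo_def by (meson order_trans)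
  hence "c\<^sup>2 / 2 * m \<le> c\<^sup>2 / 2 * (2 / c\<^sup>2 * (F p xc - F p x - inner (xc - x) ?g))"
    by (rule mult_left_mono) simp
  hence "c\<^sup>2 * m / 2 \<le> F p xc - F p x - inner (xc - x) ?g"
    using c by simp
  moreover have "inner (xc - x) ?g = - (c * D)"
    unfolding c_def using D_pos by (simp add: inner_commute)
  moreover have "c * D \<le> c * inner ?g (v - s)"
    using D_le c by (intro mult_left_mono) (auto simp: inner_diff_right)
  ultimately have "F p x - F p xc \<le> c * inner ?g (v - s) - c\<^sup>2 * m / 2"
    by linarith
  thus ?thesis
    using c by (intro exI[of _ c]) auto
next
  case False
  thus ?thesis
    using tangent by (intro exI[of _ 0]) (simp add: inner_commute)
qed

text \<open>At a vertex \<open>a\<close> the only support is \<open>{a}\<close>, so \<open>gammaA a s = 1\<close> and the quotient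
  defining \<open>mu_geo\<close> is one of the quotients defining the curvature.\<close>

lemma mu_geo_le_curv:
  fixes F :: "'p \<Rightarrow> 'c::real_inner \<Rightarrow> real"
  assumes A: "finite A" and bdd: "bdd_below (\<Union>p\<in>P. geo_sc_set (F p) (dF p) A)"
    and bdd_curv: "bdd_above (\<Union>p\<in>P. curv_set (F p) (dF p) (convex hull A))"
    and p: "p \<in> P" and a: "a \<in> A" and xc: "xc \<in> convex hull A"
    and descent: "inner (dF p a) (xc - a) < 0"
  shows "(INF p\<in>P. mu_geo (F p) (dF p) A) \<le> (SUP p\<in>P. curv (F p) (dF p) (convex hull A))"
proof -
  let ?g = "dF p a"
  obtain s where s: "s \<in> A" "fw_val ?g A = inner ?g s"
    using fw_val_attained[OF A, of ?g] a by blast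
  have a_hull: "a \<in> convex hull A" and s_hull: "s \<in> convex hull A"
    using a s(1) by (auto intro: hull_inc)
  have s_descent: "inner ?g (s - a) < 0"
    using fw_val_le_inner[OF A xc, of ?g] descent s(2) by (simp add: inner_diff_right)
  have "{a} \<in> atom_supports A a"
    unfolding atom_supports_def using a by (intro CollectI conjI exI[of _ "\<lambda>_. 1"]) auto
  hence "away_val ?g A a = inner ?g a"
    using inner_le_away_val[OF A a_hull, of ?g] away_val_le[OF A, of "{a}" a a ?g] by simp
  hence "gammaA (dF p) A a s = 1"
    unfolding gammaA_def s(2) using s_descent by (simp add: inner_diff_right field_simps)
  hence "2 / 1\<^sup>2 * (F p s - F p a - inner (s - a) ?g) \<in> geo_sc_set (F p) (dF p) A"
    unfolding geo_sc_set_def using a_hull s_hull s_descent by (intro CollectI exI[of _ a] exI[of _ s]) auto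
  moreover have "2 / 1\<^sup>2 * (F p (a + 1 *\<^sub>R (s - a)) - F p a - 1 * inner (s - a) ?g)
      \<in> curv_set (F p) (dF p) (convex hull A)"
    unfolding curv_set_def using a_hull s_hull
    by (intro CollectI exI[of _ a] exI[of _ s] exI[of _ a] exI[of _ "1::real"]) auto
  ultimately show ?thesis
    using INF_Inf_le_of_mem[OF bdd p] le_SUP_Sup_of_mem[OF bdd_curv p]
    unfolding mu_geo_def curv_def by simp (meson order_trans)
qed

section \<open>Weights of the away-step iterates\<close>

definition convex_weights :: "'c set \<Rightarrow> ('c \<Rightarrow> real) \<Rightarrow> 'c::real_vector \<Rightarrow> bool" where
  "convex_weights A \<alpha> x \<longleftrightarrow>
     (\<forall>a. 0 \<le> \<alpha> a) \<and> (\<forall>a. a \<notin> A \<longrightarrow> \<alpha> a = 0) \<and> sum \<alpha> A = 1 \<and> x = (\<Sum>a\<in>A. \<alpha> a *\<^sub>R a)"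

lemma convex_weights_mem_hull:
  assumes A: "finite A" and w: "convex_weights A \<alpha> x"
  shows "x \<in> convex hull A"
proof -
  have "(\<forall>a\<in>A. 0 \<le> \<alpha> a) \<and> sum \<alpha> A = 1 \<and> (\<Sum>a\<in>A. \<alpha> a *\<^sub>R a) = x"
    using w unfolding convex_weights_def by simp
  thus ?thesis unfolding convex_hull_finite[OF A] by blast
qed

lemma convex_weights_le_1:
  assumes "finite A" "convex_weights A \<alpha> x"
  shows "\<alpha> a \<le> 1"
proof (cases "a \<in> A")
  case True
  have "\<alpha> a \<le> sum \<alpha> A" using assms True unfolding convex_weights_def by (intro member_le_sum) auto
  thus ?thesis using assms unfolding convex_weights_def by simp
next
  case False thus ?thesis using assms unfolding convex_weights_def by simp
qed

lemma convex_weights_support: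
  fixes A :: "'c::real_inner set"
  assumes A: "finite A" and w: "convex_weights A \<alpha> x"
  shows "{a\<in>A. 0 < \<alpha> a} \<in> atom_supports A x"
proof -
  have "\<forall>a\<in>A. 0 \<le> \<alpha> a" "sum \<alpha> A = 1" "(\<Sum>a\<in>A. \<alpha> a *\<^sub>R a) = x"
    using w unfolding convex_weights_def by simp_all
  thus ?thesis by (rule mem_atom_supportsI[OF A])
qed

lemma convex_weights_support_nonempty:
  assumes "convex_weights A \<alpha> x"
  shows "{a\<in>A. 0 < \<alpha> a} \<noteq> {}"
proof
  assume "{a\<in>A. 0 < \<alpha> a} = {}"
  hence "\<forall>a\<in>A. \<not> 0 < \<alpha> a" by blast
  hence "\<forall>a\<in>A. \<alpha> a = 0"
    using assms unfolding convex_weights_def by (simp add: not_less order_antisym)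
  thus False using assms unfolding convex_weights_def by simp
qed

lemma convex_weights_inner_le:
  fixes g :: "'c::real_inner"
  assumes A: "finite A" and w: "convex_weights A \<alpha> x"
    and v: "\<forall>a\<in>{a\<in>A. 0 < \<alpha> a}. inner g a \<le> inner g v"
  shows "inner g x \<le> inner g v"
proof -
  have "inner g x = (\<Sum>a\<in>A. \<alpha> a * inner g a)"
    using w unfolding convex_weights_def by (simp add: inner_sum_right)
  also have "\<dots> \<le> (\<Sum>a\<in>A. \<alpha> a * inner g v)"
  proof (rule sum_mono)
    fix a assume a: "a \<in> A"
    show "\<alpha> a * inner g a \<le> \<alpha> a * inner g v"
    proof (cases "\<alpha> a = 0")
      case False
      hence "0 < \<alpha> a" using w unfolding convex_weights_def by (simp add: less_le)
      thus ?thesis using v a by (intro mult_left_mono) auto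
    qed simp
  qed
  also have "\<dots> = inner g v"
    using w unfolding convex_weights_def by (simp add: sum_distrib_right[symmetric])
  finally show ?thesis .
qed

lemma convex_weights_eq_vertex:
  assumes A: "finite A" and w: "convex_weights A \<alpha> x" and v: "v \<in> A" and one: "\<alpha> v = 1"
  shows "x = v"
proof -
  have "sum \<alpha> A = \<alpha> v + sum \<alpha> (A - {v})" using A v by (simp add: sum.remove)
  hence "sum \<alpha> (A - {v}) = 0" using w one unfolding convex_weights_def by simp
  hence z: "\<forall>a\<in>A - {v}. \<alpha> a = 0"
    using A w unfolding convex_weights_def by (subst (asm) sum_nonneg_eq_0_iff) auto
  have "x = \<alpha> v *\<^sub>R v + (\<Sum>a\<in>A - {v}. \<alpha> a *\<^sub>R a)"
    using w A v unfolding convex_weights_def by (simp add: sum.remove)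
  also have "(\<Sum>a\<in>A - {v}. \<alpha> a *\<^sub>R a) = 0" using z by simp
  finally show ?thesis using one by simp
qed

lemma convex_weights_fw_step:
  assumes A: "finite A" and w: "convex_weights A \<alpha> x" and s: "s \<in> A" and g: "0 \<le> \<gamma>" "\<gamma> \<le> 1"
  shows "convex_weights A (\<lambda>a. (1 - \<gamma>) * \<alpha> a + (if a = s then \<gamma> else 0)) (x + \<gamma> *\<^sub>R (s - x))"
proof -
  have nonneg: "\<forall>a. 0 \<le> (1 - \<gamma>) * \<alpha> a + (if a = s then \<gamma> else 0)"
    using w g unfolding convex_weights_def by auto
  have outside: "\<forall>a. a \<notin> A \<longrightarrow> (1 - \<gamma>) * \<alpha> a + (if a = s then \<gamma> else 0) = 0"
    using w s unfolding convex_weights_def by auto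
  have sum_one: "(\<Sum>a\<in>A. (1 - \<gamma>) * \<alpha> a + (if a = s then \<gamma> else 0)) = 1"
    using w s A unfolding convex_weights_def by (simp add: sum.distrib sum_distrib_left[symmetric])
  have combination: "(\<Sum>a\<in>A. ((1 - \<gamma>) * \<alpha> a + (if a = s then \<gamma> else 0)) *\<^sub>R a) = x + \<gamma> *\<^sub>R (s - x)"
  proof -
    have "(\<Sum>a\<in>A. ((1 - \<gamma>) * \<alpha> a + (if a = s then \<gamma> else 0)) *\<^sub>R a)
        = (1 - \<gamma>) *\<^sub>R (\<Sum>a\<in>A. \<alpha> a *\<^sub>R a) + (\<Sum>a\<in>A. (if a = s then \<gamma> *\<^sub>R a else 0))"
      by (simp add: scaleR_add_left sum.distrib scaleR_sum_right if_distrib[of "\<lambda>c. c *\<^sub>R _"] cong: if_cong)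
    also have "(\<Sum>a\<in>A. (if a = s then \<gamma> *\<^sub>R a else 0)) = \<gamma> *\<^sub>R s" using A s by (simp add: sum.delta')
    finally show ?thesis using w unfolding convex_weights_def by (simp add: algebra_simps)
  qed
  show ?thesis unfolding convex_weights_def using nonneg outside sum_one combination[symmetric] by blast
qed

lemma convex_weights_away_step:
  assumes A: "finite A" and w: "convex_weights A \<alpha> x" and v: "v \<in> A" "0 < \<alpha> v" and g: "0 \<le> \<gamma>"
    and gb: "\<alpha> v < 1 \<Longrightarrow> \<gamma> \<le> \<alpha> v / (1 - \<alpha> v)"
  shows "convex_weights A (\<lambda>a. (1 + \<gamma>) * \<alpha> a - (if a = v then \<gamma> else 0)) (x + \<gamma> *\<^sub>R (x - v))"
proof -
  have le1: "\<alpha> v \<le> 1" by (rule convex_weights_le_1[OF A w])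
  have nv: "0 \<le> (1 + \<gamma>) * \<alpha> v - \<gamma>"
  proof (cases "\<alpha> v < 1")
    case True
    hence "\<gamma> * (1 - \<alpha> v) \<le> \<alpha> v" using gb[OF True] by (simp add: field_simps)
    thus ?thesis by (simp add: algebra_simps)
  next
    case False thus ?thesis using le1 by simp
  qed
  have nonneg: "\<forall>a. 0 \<le> (1 + \<gamma>) * \<alpha> a - (if a = v then \<gamma> else 0)"
    using w g nv unfolding convex_weights_def by auto
  have outside: "\<forall>a. a \<notin> A \<longrightarrow> (1 + \<gamma>) * \<alpha> a - (if a = v then \<gamma> else 0) = 0"
    using w v unfolding convex_weights_def by auto
  have sum_one: "(\<Sum>a\<in>A. (1 + \<gamma>) * \<alpha> a - (if a = v then \<gamma> else 0)) = 1"
    using w v A unfolding convex_weights_def by (simp add: sum_subtractf sum_distrib_left[symmetric])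
  have combination: "(\<Sum>a\<in>A. ((1 + \<gamma>) * \<alpha> a - (if a = v then \<gamma> else 0)) *\<^sub>R a) = x + \<gamma> *\<^sub>R (x - v)"
  proof -
    have "(\<Sum>a\<in>A. ((1 + \<gamma>) * \<alpha> a - (if a = v then \<gamma> else 0)) *\<^sub>R a)
        = (1 + \<gamma>) *\<^sub>R (\<Sum>a\<in>A. \<alpha> a *\<^sub>R a) - (\<Sum>a\<in>A. (if a = v then \<gamma> *\<^sub>R a else 0))"
      by (simp add: scaleR_diff_left sum_subtractf scaleR_sum_right if_distrib[of "\<lambda>c. c *\<^sub>R _"] cong: if_cong)
    also have "(\<Sum>a\<in>A. (if a = v then \<gamma> *\<^sub>R a else 0)) = \<gamma> *\<^sub>R v" using A v by (simp add: sum.delta')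
    finally show ?thesis using w unfolding convex_weights_def by (simp add: algebra_simps)
  qed
  show ?thesis unfolding convex_weights_def using nonneg outside sum_one combination[symmetric] by blast
qed

text \<open>\<open>real_of_ereal \<infinity> = 0\<close>: if both away weights equal one, the maximal away step is \<open>0\<close>.\<close>

lemma min_away_ratio_le_left:
  assumes "0 < a" "a < 1" "0 < b" "b \<le> 1"
  shows "real_of_ereal (min (away_ratio a) (away_ratio b)) \<le> a / (1 - a)"
  using assms by (cases "b < 1") (auto simp: away_ratio_def min_def)

lemma min_away_ratio_le_right:
  assumes "0 < a" "a \<le> 1" "0 < b" "b < 1"
  shows "real_of_ereal (min (away_ratio a) (away_ratio b)) \<le> b / (1 - b)"
  using assms by (cases "a < 1") (auto simp: away_ratio_def min_def)

lemma min_away_ratio_nonneg: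
  assumes "0 < a" "a \<le> 1" "0 < b" "b \<le> 1"
  shows "0 \<le> real_of_ereal (min (away_ratio a) (away_ratio b))"
  using assms by (cases "a < 1"; cases "b < 1") (auto simp: away_ratio_def min_def)

lemma min_away_ratio_cases:
  assumes "0 < a" "a \<le> 1" "0 < b" "b \<le> 1" "a < 1 \<or> b < 1"
  shows "(a < 1 \<and> real_of_ereal (min (away_ratio a) (away_ratio b)) = a / (1 - a))
       \<or> (b < 1 \<and> real_of_ereal (min (away_ratio a) (away_ratio b)) = b / (1 - b))"
  using assms by (cases "a < 1"; cases "b < 1") (auto simp: away_ratio_def min_def)

lemma support_fw_step_subset:
  fixes \<alpha> :: "'c \<Rightarrow> real" and \<gamma> :: real
  assumes "\<forall>a. 0 \<le> \<alpha> a" "0 \<le> \<gamma>" "\<gamma> \<le> 1"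
  shows "{a\<in>A. 0 < (1 - \<gamma>) * \<alpha> a + (if a = s then \<gamma> else 0)} \<subseteq> insert s {a\<in>A. 0 < \<alpha> a}"
proof
  fix a assume a: "a \<in> {a\<in>A. 0 < (1 - \<gamma>) * \<alpha> a + (if a = s then \<gamma> else 0)}"
  show "a \<in> insert s {a\<in>A. 0 < \<alpha> a}"
  proof (cases "a = s")
    case False
    hence "0 < (1 - \<gamma>) * \<alpha> a" using a by auto
    hence "\<alpha> a \<noteq> 0" by auto
    thus ?thesis using assms(1) a by (auto simp: less_le)
  qed simp
qed

lemma support_away_step_subset:
  fixes \<alpha> :: "'c \<Rightarrow> real" and \<gamma> :: real
  assumes "\<forall>a. 0 \<le> \<alpha> a" "0 \<le> \<gamma>" "0 < \<alpha> v"
  shows "{a\<in>A. 0 < (1 + \<gamma>) * \<alpha> a - (if a = v then \<gamma> else 0)} \<subseteq> {a\<in>A. 0 < \<alpha> a}"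
proof
  fix a assume a: "a \<in> {a\<in>A. 0 < (1 + \<gamma>) * \<alpha> a - (if a = v then \<gamma> else 0)}"
  show "a \<in> {a\<in>A. 0 < \<alpha> a}"
  proof (cases "a = v")
    case False
    hence "0 < (1 + \<gamma>) * \<alpha> a" using a by auto
    hence "\<alpha> a \<noteq> 0" by auto
    thus ?thesis using assms(1) a by (auto simp: less_le)
  next
    case True thus ?thesis using a assms by auto
  qed
qed

lemma support_drop_step_subset:
  fixes \<alpha> :: "'c \<Rightarrow> real" and \<gamma> :: real
  assumes "\<forall>a. 0 \<le> \<alpha> a" "0 < \<alpha> v" "\<alpha> v < 1" "\<gamma> = \<alpha> v / (1 - \<alpha> v)"
  shows "{a\<in>A. 0 < (1 + \<gamma>) * \<alpha> a - (if a = v then \<gamma> else 0)} \<subseteq> {a\<in>A. 0 < \<alpha> a} - {v}"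
proof -
  have g0: "0 \<le> \<gamma>" using assms by (simp add: divide_nonneg_pos)
  have "(1 + \<gamma>) * \<alpha> v - \<gamma> = 0" using assms(3) unfolding assms(4) by (simp add: field_simps)
  thus ?thesis using support_away_step_subset[OF assms(1) g0 assms(2), of A] by auto
qed

lemma convex_weights_indicator:
  assumes "finite A" "x0 \<in> A"
  shows "convex_weights A (\<lambda>a. if a = x0 then 1 else 0) x0"
  unfolding convex_weights_def using assms by (simp add: if_distrib[of "\<lambda>c. c *\<^sub>R _"] cong: if_cong)

lemma afw_gaps_nonneg:
  fixes x :: "'a::real_inner" and y :: "'b::real_inner" and r s v :: "'a \<times> 'b"
  assumes A: "finite A" and B: "finite B" and wx: "convex_weights A \<alpha>x x" and wy: "convex_weights B \<alpha>y y"
    and lmo: "\<forall>s'\<in>(convex hull A) \<times> (convex hull B). inner s r \<le> inner s' r"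
    and v: "v \<in> {a\<in>A. 0 < \<alpha>x a} \<times> {b\<in>B. 0 < \<alpha>y b}"
    and vmax: "\<forall>v'\<in>{a\<in>A. 0 < \<alpha>x a} \<times> {b\<in>B. 0 < \<alpha>y b}. inner r v' \<le> inner r v"
  shows "0 \<le> inner (- r) (s - (x, y))" "0 \<le> inner (- r) ((x, y) - v)"
proof -
  have "(x, y) \<in> (convex hull A) \<times> (convex hull B)"
    using convex_weights_mem_hull[OF A wx] convex_weights_mem_hull[OF B wy] by simp
  hence "inner s r \<le> inner (x, y) r" using lmo by blast
  thus "0 \<le> inner (- r) (s - (x, y))" by (simp add: inner_diff_right inner_commute)
  obtain rx ry where rr: "r = (rx, ry)" by (cases r)
  obtain vx vy where vv: "v = (vx, vy)" by (cases v)
  have "inner rx a \<le> inner rx vx" if "a \<in> {a\<in>A. 0 < \<alpha>x a}" for a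
    using vmax[rule_format, of "(a, vy)"] that v vv rr by auto
  hence x_part: "inner rx x \<le> inner rx vx" by (intro convex_weights_inner_le[OF A wx]) auto
  have "inner ry b \<le> inner ry vy" if "b \<in> {b\<in>B. 0 < \<alpha>y b}" for b
    using vmax[rule_format, of "(vx, b)"] that v vv rr by auto
  hence y_part: "inner ry y \<le> inner ry vy" by (intro convex_weights_inner_le[OF B wy]) auto
  show "0 \<le> inner (- r) ((x, y) - v)" using x_part y_part rr vv by (simp add: inner_diff_right)
qed

lemma card_support_fw_step_le:
  fixes \<alpha> :: "'c \<Rightarrow> real"
  assumes "finite A" "\<forall>a. 0 \<le> \<alpha> a" "0 \<le> \<gamma>" "\<gamma> \<le> 1"
  shows "card {a\<in>A. 0 < (1 - \<gamma>) * \<alpha> a + (if a = s then \<gamma> else 0)} \<le> card {a\<in>A. 0 < \<alpha> a} + 1"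
proof -
  have "card {a\<in>A. 0 < (1 - \<gamma>) * \<alpha> a + (if a = s then \<gamma> else 0)} \<le> card (insert s {a\<in>A. 0 < \<alpha> a})"
    using support_fw_step_subset[OF assms(2-4), of A s] assms(1) by (intro card_mono) auto
  also have "\<dots> \<le> card {a\<in>A. 0 < \<alpha> a} + 1"
    using assms(1) by (simp add: card_insert_if)
  finally show ?thesis .
qed

lemma card_support_away_step_le:
  fixes \<alpha> :: "'c \<Rightarrow> real"
  assumes "finite A" "\<forall>a. 0 \<le> \<alpha> a" "0 \<le> \<gamma>" "0 < \<alpha> v"
  shows "card {a\<in>A. 0 < (1 + \<gamma>) * \<alpha> a - (if a = v then \<gamma> else 0)} \<le> card {a\<in>A. 0 < \<alpha> a}"
  by (rule card_mono) (use assms(1) support_away_step_subset[OF assms(2-4)] in simp_all)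

lemma card_support_drop_step_less:
  fixes \<alpha> :: "'c \<Rightarrow> real"
  assumes "finite A" "\<forall>a. 0 \<le> \<alpha> a" "v \<in> A" "0 < \<alpha> v" "\<alpha> v < 1" "\<gamma> = \<alpha> v / (1 - \<alpha> v)"
  shows "card {a\<in>A. 0 < (1 + \<gamma>) * \<alpha> a - (if a = v then \<gamma> else 0)} < card {a\<in>A. 0 < \<alpha> a}"
proof -
  have "card {a\<in>A. 0 < (1 + \<gamma>) * \<alpha> a - (if a = v then \<gamma> else 0)} \<le> card ({a\<in>A. 0 < \<alpha> a} - {v})"
    by (rule card_mono) (use assms(1) support_drop_step_subset[OF assms(2,4-6)] in simp_all)
  also have "\<dots> < card {a\<in>A. 0 < \<alpha> a}"
    using assms(1,3,4) by (intro card_Diff1_less) auto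
  finally show ?thesis .
qed

section \<open>The runs of SP-FW and SP-AFW\<close>

definition fw_gap :: "('a \<times> 'b \<Rightarrow> 'a \<times> 'b) \<Rightarrow> ('a::real_inner) \<times> ('b::real_inner) \<Rightarrow> 'a \<times> 'b \<Rightarrow> real"
  where "fw_gap grad z s = inner (z - s) (sp_r grad z)"

lemma spfw_run_step:
  assumes "spfw_run X Y grad \<nu> C z s"
  shows "s t \<in> X \<times> Y" "\<forall>s'\<in>X \<times> Y. inner (s t) (sp_r grad (z t)) \<le> inner s' (sp_r grad (z t))"
    and "z (Suc t) = (1 - min 1 (\<nu> / (2 * C) * fw_gap grad (z t) (s t))) *\<^sub>R z t
                       + min 1 (\<nu> / (2 * C) * fw_gap grad (z t) (s t)) *\<^sub>R s t"
  using assms unfolding spfw_run_def Let_def fw_gap_def by blast+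

lemma fw_gap_nonneg:
  assumes "z \<in> K" "\<forall>s'\<in>K. inner s (sp_r grad z) \<le> inner s' (sp_r grad z)"
  shows "0 \<le> fw_gap grad z s"
  using assms unfolding fw_gap_def by (auto simp: inner_diff_left)

lemma spfw_run_in_domain:
  assumes run: "spfw_run X Y grad \<nu> C z s" and XY: "convex X" "convex Y" and \<nu>C: "0 \<le> \<nu>" "0 \<le> C"
  shows "z t \<in> X \<times> Y"
proof (induction t)
  case 0
  show ?case
    using run unfolding spfw_run_def by simp
next
  case (Suc t)
  let ?\<gamma> = "min 1 (\<nu> / (2 * C) * fw_gap grad (z t) (s t))"
  have "0 \<le> ?\<gamma>" "?\<gamma> \<le> 1"
    using fw_gap_nonneg[OF Suc spfw_run_step(2)[OF run]] \<nu>C by auto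
  thus ?case
    using convexD[OF convex_Times[OF XY] Suc spfw_run_step(1)[OF run], of "1 - ?\<gamma>" ?\<gamma>]
      spfw_run_step(3)[OF run] by simp
qed

definition afw_fw_step ::
    "('a \<times> 'b \<Rightarrow> 'a \<times> 'b) \<Rightarrow> ('a::real_inner) \<times> ('b::real_inner) \<Rightarrow> 'a \<times> 'b \<Rightarrow> 'a \<times> 'b \<Rightarrow> bool"
  where "afw_fw_step grad z s v \<longleftrightarrow> inner (- sp_r grad z) (z - v) \<le> inner (- sp_r grad z) (s - z)"

definition pfw_gap ::
    "('a \<times> 'b \<Rightarrow> 'a \<times> 'b) \<Rightarrow> ('a::real_inner) \<times> ('b::real_inner) \<Rightarrow> 'a \<times> 'b \<Rightarrow> 'a \<times> 'b \<Rightarrow> real"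
  where "pfw_gap grad z s v = inner (- sp_r grad z) ((s - z) + (z - v))"

lemma spafw_run_init:
  assumes "spafw_run A B grad \<nu> C z ax ay s v gam gmax"
  shows "fst (z 0) \<in> A" "snd (z 0) \<in> B"
    "ax 0 = (\<lambda>a. if a = fst (z 0) then 1 else 0)" "ay 0 = (\<lambda>b. if b = snd (z 0) then 1 else 0)"
  using assms unfolding spafw_run_def by auto

lemma spafw_run_step:
  fixes t :: nat
  assumes "spafw_run A B grad \<nu> C z ax ay s v gam gmax"
  defines "r \<equiv> sp_r grad (z t)" and "Sx \<equiv> {a\<in>A. 0 < ax t a}" and "Sy \<equiv> {b\<in>B. 0 < ay t b}"
    and "fw \<equiv> afw_fw_step grad (z t) (s t) (v t)"
  shows "s t \<in> A \<times> B" "\<forall>s'\<in>(convex hull A) \<times> (convex hull B). inner (s t) r \<le> inner s' r"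
    and "v t \<in> Sx \<times> Sy" "\<forall>v'\<in>Sx \<times> Sy. inner r v' \<le> inner r (v t)"
    and "gmax t = (if fw then 1
                   else real_of_ereal (min (away_ratio (ax t (fst (v t)))) (away_ratio (ay t (snd (v t))))))"
    and "gam t = min (gmax t) (\<nu> / (2 * C) * pfw_gap grad (z t) (s t) (v t))"
    and "z (Suc t) = z t + gam t *\<^sub>R (if fw then s t - z t else z t - v t)"
    and "ax (Suc t) = (if fw then (\<lambda>a. (1 - gam t) * ax t a + (if a = fst (s t) then gam t else 0))
                      else (\<lambda>a. (1 + gam t) * ax t a - (if a = fst (v t) then gam t else 0)))"
    and "ay (Suc t) = (if fw then (\<lambda>b. (1 - gam t) * ay t b + (if b = snd (s t) then gam t else 0))
                      else (\<lambda>b. (1 + gam t) * ay t b - (if b = snd (v t) then gam t else 0)))"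
  using assms(1) unfolding spafw_run_def Let_def afw_fw_step_def pfw_gap_def assms(2-5) by blast+

lemma spafw_run_step_nonneg:
  assumes run: "spafw_run A B grad \<nu> C z ax ay s v gam gmax" and A: "finite A" and B: "finite B"
    and \<nu>C: "0 \<le> \<nu>" "0 \<le> C"
    and wx: "convex_weights A (ax t) (fst (z t))" and wy: "convex_weights B (ay t) (snd (z t))"
  shows "0 \<le> inner (- sp_r grad (z t)) (s t - z t)" "0 \<le> inner (- sp_r grad (z t)) (z t - v t)"
    and "0 \<le> pfw_gap grad (z t) (s t) (v t)" "0 \<le> gam t"
proof -
  note step = spafw_run_step[OF run, of t]
  show gaps: "0 \<le> inner (- sp_r grad (z t)) (s t - z t)" "0 \<le> inner (- sp_r grad (z t)) (z t - v t)"
    using afw_gaps_nonneg[OF A B wx wy step(2-4)] by simp_all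
  thus gap: "0 \<le> pfw_gap grad (z t) (s t) (v t)"
    unfolding pfw_gap_def inner_add_right by linarith
  have "0 < ax t (fst (v t))" "0 < ay t (snd (v t))"
    using step(3) by auto
  hence "0 \<le> gmax t"
    using step(5) min_away_ratio_nonneg convex_weights_le_1[OF A wx] convex_weights_le_1[OF B wy] by simp
  moreover have "0 \<le> \<nu> / (2 * C) * pfw_gap grad (z t) (s t) (v t)"
    using \<nu>C gap by simp
  ultimately show "0 \<le> gam t"
    using step(6) by simp
qed

lemma spafw_run_convex_weights:
  assumes run: "spafw_run A B grad \<nu> C z ax ay s v gam gmax" and A: "finite A" and B: "finite B"
    and \<nu>C: "0 \<le> \<nu>" "0 \<le> C"
  shows "convex_weights A (ax t) (fst (z t)) \<and> convex_weights B (ay t) (snd (z t))"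
proof (induction t)
  case 0
  show ?case
    using convex_weights_indicator[OF A] convex_weights_indicator[OF B] spafw_run_init[OF run] by simp
next
  case (Suc t)
  hence wx: "convex_weights A (ax t) (fst (z t))" and wy: "convex_weights B (ay t) (snd (z t))"
    by auto
  note step = spafw_run_step[OF run, of t]
  have \<gamma>: "0 \<le> gam t"
    using spafw_run_step_nonneg[OF run A B \<nu>C wx wy] by simp
  show ?case
  proof (cases "afw_fw_step grad (z t) (s t) (v t)")
    case True
    have "gam t \<le> 1" "fst (s t) \<in> A" "snd (s t) \<in> B"
      using step(1,5,6) True by auto
    hence "convex_weights A (ax (Suc t)) (fst (z t) + gam t *\<^sub>R (fst (s t) - fst (z t)))"
      and "convex_weights B (ay (Suc t)) (snd (z t) + gam t *\<^sub>R (snd (s t) - snd (z t)))"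
      using convex_weights_fw_step[OF A wx _ \<gamma>] convex_weights_fw_step[OF B wy _ \<gamma>] step(8,9) True
      by simp_all
    moreover have "z (Suc t) = z t + gam t *\<^sub>R (s t - z t)"
      using step(7) True by simp
    ultimately show ?thesis
      by simp
  next
    case False
    let ?a = "ax t (fst (v t))" and ?b = "ay t (snd (v t))"
    have v: "fst (v t) \<in> A" "0 < ?a" "snd (v t) \<in> B" "0 < ?b"
      using step(3) by auto
    have le1: "?a \<le> 1" "?b \<le> 1"
      using convex_weights_le_1[OF A wx] convex_weights_le_1[OF B wy] by auto
    have \<gamma>max: "gam t \<le> real_of_ereal (min (away_ratio ?a) (away_ratio ?b))"
      using step(5,6) False by simp
    have "gam t \<le> ?a / (1 - ?a)" if "?a < 1"
      using min_away_ratio_le_left[OF v(2) that v(4) le1(2)] \<gamma>max by linarith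
    hence "convex_weights A (ax (Suc t)) (fst (z t) + gam t *\<^sub>R (fst (z t) - fst (v t)))"
      using convex_weights_away_step[OF A wx v(1,2) \<gamma>] step(8) False by simp
    moreover have "gam t \<le> ?b / (1 - ?b)" if "?b < 1"
      using min_away_ratio_le_right[OF v(2) le1(1) v(4) that] \<gamma>max by linarith
    hence "convex_weights B (ay (Suc t)) (snd (z t) + gam t *\<^sub>R (snd (z t) - snd (v t)))"
      using convex_weights_away_step[OF B wy v(3,4) \<gamma>] step(9) False by simp
    moreover have "z (Suc t) = z t + gam t *\<^sub>R (z t - v t)"
      using step(7) False by simp
    ultimately show ?thesis
      by simp
  qed
qed

lemma spafw_run_card_support_step:
  assumes run: "spafw_run A B grad \<nu> C z ax ay s v gam gmax" and A: "finite A" and B: "finite B"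
    and \<nu>C: "0 \<le> \<nu>" "0 \<le> C"
  shows "card {a\<in>A. 0 < ax (Suc t) a} + card {b\<in>B. 0 < ay (Suc t) b}
           + (if gam t = gmax t \<and> gmax t < 1 then 3 else 0)
         \<le> card {a\<in>A. 0 < ax t a} + card {b\<in>B. 0 < ay t b} + 2"
proof -
  have wx: "convex_weights A (ax t) (fst (z t))" and wy: "convex_weights B (ay t) (snd (z t))"
    using spafw_run_convex_weights[OF run A B \<nu>C] by auto
  have nn: "\<forall>a. 0 \<le> ax t a" "\<forall>b. 0 \<le> ay t b"
    using wx wy unfolding convex_weights_def by auto
  note step = spafw_run_step[OF run, of t] and nonneg = spafw_run_step_nonneg[OF run A B \<nu>C wx wy]
  show ?thesis
  proof (cases "afw_fw_step grad (z t) (s t) (v t)")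
    case True
    have "gmax t = 1" and \<gamma>: "gam t \<le> 1"
      using step(5,6) True by auto
    moreover have "card {a\<in>A. 0 < ax (Suc t) a} \<le> card {a\<in>A. 0 < ax t a} + 1"
      using card_support_fw_step_le[OF A nn(1) nonneg(4) \<gamma>] step(8) True by simp
    moreover have "card {b\<in>B. 0 < ay (Suc t) b} \<le> card {b\<in>B. 0 < ay t b} + 1"
      using card_support_fw_step_le[OF B nn(2) nonneg(4) \<gamma>] step(9) True by simp
    ultimately show ?thesis
      by simp
  next
    case False
    let ?a = "ax t (fst (v t))" and ?b = "ay t (snd (v t))"
    have v: "fst (v t) \<in> A" "0 < ?a" "snd (v t) \<in> B" "0 < ?b"
      using step(3) by auto
    have le1: "?a \<le> 1" "?b \<le> 1"
      using convex_weights_le_1[OF A wx] convex_weights_le_1[OF B wy] by auto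
    have cards: "card {a\<in>A. 0 < ax (Suc t) a} \<le> card {a\<in>A. 0 < ax t a}"
      "card {b\<in>B. 0 < ay (Suc t) b} \<le> card {b\<in>B. 0 < ay t b}"
      using card_support_away_step_le[OF A nn(1) nonneg(4) v(2)]
        card_support_away_step_le[OF B nn(2) nonneg(4) v(4)] step(8,9) False by simp_all
    show ?thesis
    proof (cases "gam t = gmax t \<and> gmax t < 1")
      case drop: True
      have "?a < 1 \<or> ?b < 1"
      proof (rule ccontr)
        assume "\<not> (?a < 1 \<or> ?b < 1)"
        hence "fst (z t) = fst (v t)" "snd (z t) = snd (v t)"
          using convex_weights_eq_vertex[OF A wx v(1)] convex_weights_eq_vertex[OF B wy v(3)] le1 by auto
        hence "z t = v t"
          by (simp add: prod_eq_iff)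
        thus False
          using False nonneg(1) unfolding afw_fw_step_def by simp
      qed
      hence "(?a < 1 \<and> gam t = ?a / (1 - ?a)) \<or> (?b < 1 \<and> gam t = ?b / (1 - ?b))"
        using min_away_ratio_cases[OF v(2) le1(1) v(4) le1(2)] drop step(5) False by auto
      hence "card {a\<in>A. 0 < ax (Suc t) a} < card {a\<in>A. 0 < ax t a}
           \<or> card {b\<in>B. 0 < ay (Suc t) b} < card {b\<in>B. 0 < ay t b}"
      proof (elim disjE conjE)
        assume "?a < 1" "gam t = ?a / (1 - ?a)"
        moreover have "ax (Suc t) = (\<lambda>a. (1 + gam t) * ax t a - (if a = fst (v t) then gam t else 0))"
          using step(8) False by simp
        ultimately have "card {a\<in>A. 0 < ax (Suc t) a} < card {a\<in>A. 0 < ax t a}"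
          using card_support_drop_step_less[OF A nn(1) v(1,2), of "gam t"] by presburger
        thus ?thesis ..
      next
        assume "?b < 1" "gam t = ?b / (1 - ?b)"
        moreover have "ay (Suc t) = (\<lambda>b. (1 + gam t) * ay t b - (if b = snd (v t) then gam t else 0))"
          using step(9) False by simp
        ultimately have "card {b\<in>B. 0 < ay (Suc t) b} < card {b\<in>B. 0 < ay t b}"
          using card_support_drop_step_less[OF B nn(2) v(3,4), of "gam t"] by presburger
        thus ?thesis ..
      qed
      thus ?thesis
        using cards drop by auto
    next
      case False
      thus ?thesis
        using cards by auto
    qed
  qed
qed

lemma card_filter_less_Suc:
  "card {t. t < Suc T \<and> P t} = card {t. t < T \<and> P t} + (if P T then 1 else 0)"
proof (cases "P T")
  case True
  hence "{t. t < Suc T \<and> P t} = insert T {t. t < T \<and> P t}" by (auto simp: less_Suc_eq)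
  thus ?thesis using True by simp
next
  case False
  hence "{t. t < Suc T \<and> P t} = {t. t < T \<and> P t}" by (auto simp: less_Suc_eq)
  thus ?thesis using False by simp
qed

lemma spafw_run_drop_steps_le:
  assumes run: "spafw_run A B grad \<nu> C z ax ay s v gam gmax" and A: "finite A" and B: "finite B"
    and \<nu>C: "0 \<le> \<nu>" "0 \<le> C"
  shows "real (card {t. t < T \<and> (gam t = gmax t \<and> gmax t < 1)}) \<le> 2 / 3 * real T"
proof -
  define N where "N t = card {a\<in>A. 0 < ax t a} + card {b\<in>B. 0 < ay t b}" for t
  define D where "D T = card {t. t < T \<and> (gam t = gmax t \<and> gmax t < 1)}" for T
  have "2 \<le> N T"
  proof -
    have "{a\<in>A. 0 < ax T a} \<noteq> {}" "{b\<in>B. 0 < ay T b} \<noteq> {}"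
      using spafw_run_convex_weights[OF run A B \<nu>C] convex_weights_support_nonempty by blast+
    hence "0 < card {a\<in>A. 0 < ax T a}" "0 < card {b\<in>B. 0 < ay T b}"
      using A B by (simp_all add: card_gt_0_iff)
    thus ?thesis
      unfolding N_def by linarith
  qed
  moreover have "N T + 3 * D T \<le> 2 + 2 * T"
  proof (induction T)
    case 0
    show ?case
      unfolding N_def D_def using spafw_run_init[OF run] by simp
  next
    case (Suc T)
    have "D (Suc T) = D T + (if gam T = gmax T \<and> gmax T < 1 then 1 else 0)"
      unfolding D_def by (rule card_filter_less_Suc)
    thus ?case
      using Suc spafw_run_card_support_step[OF run A B \<nu>C, of T] unfolding N_def[symmetric]
      by (cases "gam T = gmax T \<and> gmax T < 1") simp_all
  qed
  ultimately have "3 * D T \<le> 2 * T"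
    by linarith
  thus ?thesis
    unfolding D_def by simp
qed

lemma spafw_run_in_domain:
  assumes run: "spafw_run A B grad \<nu> C z ax ay s v gam gmax" and A: "finite A" and B: "finite B"
    and \<nu>C: "0 \<le> \<nu>" "0 \<le> C"
  shows "z t \<in> (convex hull A) \<times> (convex hull B)"
  using convex_weights_mem_hull[OF A] convex_weights_mem_hull[OF B] spafw_run_convex_weights[OF run A B \<nu>C]
  by (simp add: mem_Times_iff) blast

section \<open>Saddle-point problems\<close>

locale saddle_problem =
  fixes X :: "'a::euclidean_space set" and Y :: "'b::euclidean_space set"
    and L :: "'a \<times> 'b \<Rightarrow> real" and grad :: "'a \<times> 'b \<Rightarrow> 'a \<times> 'b"
    and xs :: 'a and ys :: 'b
  assumes X: "X \<noteq> {}" "convex X" "compact X"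
    and Y: "Y \<noteq> {}" "convex Y" "compact Y"
    and diff: "\<forall>z\<in>X \<times> Y. (L has_derivative (\<lambda>h. inner (grad z) h)) (at z)"
    and sc: "\<exists>\<mu>X \<mu>Y. \<mu>X > 0 \<and> \<mu>Y > 0 \<and> (\<forall>y\<in>Y. sconvex_on \<mu>X X (\<lambda>x. L (x, y)))
                                     \<and> (\<forall>x\<in>X. sconvex_on \<mu>Y Y (\<lambda>y. - L (x, y)))"
    and saddle: "xs \<in> X" "ys \<in> Y" "\<forall>x\<in>X. \<forall>y\<in>Y. L (xs, y) \<le> L (xs, ys) \<and> L (xs, ys) \<le> L (x, ys)"
    and curv_fin: "bdd_above (\<Union>y\<in>Y. curv_set (\<lambda>x. L (x, y)) (\<lambda>x. fst (grad (x, y))) X)"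
                  "bdd_above (\<Union>x\<in>X. curv_set (\<lambda>y. - L (x, y)) (\<lambda>y. - snd (grad (x, y))) Y)"
begin

definition "curv_X = (SUP y\<in>Y. curv (\<lambda>x. L (x, y)) (\<lambda>x. fst (grad (x, y))) X)"
definition "curv_Y = (SUP x\<in>X. curv (\<lambda>y. - L (x, y)) (\<lambda>y. - snd (grad (x, y))) Y)"

lemma C_L_eq: "C_L X Y L grad = (curv_X + curv_Y) / 2"
  unfolding C_L_def curv_X_def curv_Y_def ..

lemma curv_X_nonneg: "0 \<le> curv_X"
  unfolding curv_X_def using curv_SUP_nonneg[OF curv_fin(1) saddle(2,1)] .

lemma curv_Y_nonneg: "0 \<le> curv_Y"
  unfolding curv_Y_def using curv_SUP_nonneg[OF curv_fin(2) saddle(1,2)] .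

lemma C_L_nonneg: "0 \<le> C_L X Y L grad"
  unfolding C_L_eq using curv_X_nonneg curv_Y_nonneg by simp

lemma has_derivative_L_x:
  assumes "x \<in> X" "y \<in> Y"
  shows "((\<lambda>x. L (x, y)) has_derivative (\<lambda>h. inner (fst (grad (x, y))) h)) (at x)"
proof -
  have "((\<lambda>x. (x, y)) has_derivative (\<lambda>h. (h, 0))) (at x)"
    by (auto intro!: derivative_eq_intros)
  from has_derivative_compose[OF this] diff assms
  have "((\<lambda>x. L (x, y)) has_derivative (\<lambda>h. inner (grad (x, y)) (h, 0))) (at x)"
    by auto
  thus ?thesis
    by (simp add: inner_prod_def)
qed

lemma has_derivative_neg_L_y:
  assumes "x \<in> X" "y \<in> Y"
  shows "((\<lambda>y. - L (x, y)) has_derivative (\<lambda>h. inner (- snd (grad (x, y))) h)) (at y)"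
proof -
  have "((\<lambda>y. (x, y)) has_derivative (\<lambda>h. (0, h))) (at y)"
    by (auto intro!: derivative_eq_intros)
  from has_derivative_minus[OF has_derivative_compose[OF this]] diff assms
  have "((\<lambda>y. - L (x, y)) has_derivative (\<lambda>h. - inner (grad (x, y)) (0, h))) (at y)"
    by auto
  thus ?thesis
    by (simp add: inner_prod_def)
qed

lemma L_x_above_tangent:
  assumes "x \<in> X" "x' \<in> X" "y \<in> Y"
  shows "L (x, y) + inner (x' - x) (fst (grad (x, y))) \<le> L (x', y)"
proof -
  obtain \<mu> where "0 < \<mu>" "sconvex_on \<mu> X (\<lambda>x. L (x, y))"
    using sc assms(3) by blast
  thus ?thesis
    using sconvex_on_above_tangent has_derivative_L_x assms by (metis less_imp_le)
qed

lemma neg_L_y_above_tangent: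
  assumes "x \<in> X" "y \<in> Y" "y' \<in> Y"
  shows "- L (x, y) + inner (y' - y) (- snd (grad (x, y))) \<le> - L (x, y')"
proof -
  obtain \<mu> where "0 < \<mu>" "sconvex_on \<mu> Y (\<lambda>y. - L (x, y))"
    using sc assms(1) by blast
  thus ?thesis
    using sconvex_on_above_tangent has_derivative_neg_L_y assms by (metis less_imp_le)
qed

lemma L_x_strict_min:
  assumes "x \<in> X" "x \<noteq> xs"
  shows "L (xs, ys) < L (x, ys)"
proof -
  obtain \<mu> where "0 < \<mu>" "sconvex_on \<mu> X (\<lambda>x. L (x, ys))"
    using sc saddle(2) by blast
  thus ?thesis
    using sconvex_on_minimizer_strict[of \<mu> X "\<lambda>x. L (x, ys)"] X(2) saddle assms by blast
qed

lemma L_y_strict_max: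
  assumes "y \<in> Y" "y \<noteq> ys"
  shows "L (xs, y) < L (xs, ys)"
proof -
  obtain \<mu> where "0 < \<mu>" "sconvex_on \<mu> Y (\<lambda>y. - L (xs, y))"
    using sc saddle(1) by blast
  hence "- L (xs, ys) < - L (xs, y)"
    using sconvex_on_minimizer_strict[of \<mu> Y "\<lambda>y. - L (xs, y)"] Y(2) saddle assms by auto
  thus ?thesis by simp
qed

lemma sp_w_eq:
  assumes "z \<in> X \<times> Y"
  shows "sp_w L xs ys z = (L (fst z, ys) - L (xs, ys)) + (L (xs, ys) - L (xs, snd z))"
    and "0 \<le> L (fst z, ys) - L (xs, ys)" "0 \<le> L (xs, ys) - L (xs, snd z)"
  using assms saddle unfolding sp_w_def by (auto simp: mem_Times_iff)

lemma MXY_bound: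
  assumes bdd: "bdd_above (MXY_set X Y L grad xs ys)" and x: "x \<in> X" "s \<in> X" "v \<in> X" and y: "y \<in> Y"
  shows "inner (s - v) (fst (grad (x, ys)) - fst (grad (x, y)))
           \<le> M_L X Y L grad xs ys * sqrt (L (xs, ys) - L (xs, y))"
proof (cases "y = ys")
  case False
  let ?q = "sqrt (L (xs, ys) - L (xs, y))"
  have q: "0 < ?q"
    using L_y_strict_max[OF y False] by simp
  have "inner (s - v) ((fst (grad (x, ys)) - fst (grad (x, y))) /\<^sub>R ?q) \<in> MXY_set X Y L grad xs ys"
    unfolding MXY_set_def using x y False by blast
  hence "inner (s - v) (fst (grad (x, ys)) - fst (grad (x, y))) / ?q \<le> M_L X Y L grad xs ys"
    unfolding M_L_def using bdd
    by (simp add: cSup_upper le_max_iff_disj inner_scaleR_right divide_inverse mult.commute)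
  thus ?thesis
    using q by (simp add: divide_le_eq)
qed simp

lemma MYX_bound:
  assumes bdd: "bdd_above (MYX_set X Y L grad xs ys)" and x: "x \<in> X" and y: "y \<in> Y" "s \<in> Y" "v \<in> Y"
  shows "inner (s - v) (snd (grad (x, y)) - snd (grad (xs, y)))
           \<le> M_L X Y L grad xs ys * sqrt (L (x, ys) - L (xs, ys))"
proof (cases "x = xs")
  case False
  let ?q = "sqrt (L (x, ys) - L (xs, ys))"
  have q: "0 < ?q"
    using L_x_strict_min[OF x False] by simp
  have "inner (s - v) ((snd (grad (x, y)) - snd (grad (xs, y))) /\<^sub>R ?q) \<in> MYX_set X Y L grad xs ys"
    unfolding MYX_set_def using x y False by blast
  hence "inner (s - v) (snd (grad (x, y)) - snd (grad (xs, y))) / ?q \<le> M_L X Y L grad xs ys"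
    unfolding M_L_def using bdd
    by (simp add: cSup_upper le_max_iff_disj inner_scaleR_right divide_inverse mult.commute)
  thus ?thesis
    using q by (simp add: divide_le_eq)
qed simp

text \<open>Curvature controls \<open>x \<mapsto> L (x, ys)\<close> and \<open>y \<mapsto> - L (xs, y)\<close>; the bilinearity constant then
  moves their gradients, taken at \<open>(x, ys)\<close> and \<open>(xs, y)\<close>, to the current point \<open>(x, y)\<close>.\<close>

lemma sp_w_descent:
  assumes bdd: "bdd_above (MXY_set X Y L grad xs ys)" "bdd_above (MYX_set X Y L grad xs ys)"
    and z: "z \<in> X \<times> Y" and pq: "p \<in> X \<times> Y" "q \<in> X \<times> Y" and \<gamma>: "0 \<le> \<gamma>"
    and z': "z + \<gamma> *\<^sub>R (p - q) \<in> X \<times> Y"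
  shows "sp_w L xs ys (z + \<gamma> *\<^sub>R (p - q)) \<le> sp_w L xs ys z + \<gamma> * inner (p - q) (sp_r grad z)
          + \<gamma> * (M_L X Y L grad xs ys * (sqrt (L (fst z, ys) - L (xs, ys)) + sqrt (L (xs, ys) - L (xs, snd z))))
          + \<gamma>\<^sup>2 * C_L X Y L grad"
proof -
  obtain x y where zz: "z = (x, y)" by (cases z)
  obtain px py where pp: "p = (px, py)" by (cases p)
  obtain qx qy where qq: "q = (qx, qy)" by (cases q)
  have xy: "x \<in> X" "y \<in> Y" "px \<in> X" "py \<in> Y" "qx \<in> X" "qy \<in> Y"
    using z pq zz pp qq by auto
  have z'xy: "x + \<gamma> *\<^sub>R (px - qx) \<in> X" "y + \<gamma> *\<^sub>R (py - qy) \<in> Y"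
    using z' zz pp qq by auto
  let ?M = "M_L X Y L grad xs ys"
  have curv_x: "L (x + \<gamma> *\<^sub>R (px - qx), ys)
      \<le> L (x, ys) + \<gamma> * inner (px - qx) (fst (grad (x, ys))) + \<gamma>\<^sup>2 / 2 * curv_X"
    unfolding curv_X_def using curv_step_le[OF curv_fin(1) saddle(2)] xy z'xy \<gamma> by (simp add: curv_def)
  have curv_y: "- L (xs, y + \<gamma> *\<^sub>R (py - qy))
      \<le> - L (xs, y) + \<gamma> * inner (py - qy) (- snd (grad (xs, y))) + \<gamma>\<^sup>2 / 2 * curv_Y"
    unfolding curv_Y_def using curv_step_le[OF curv_fin(2) saddle(1)] xy z'xy \<gamma> by (simp add: curv_def)
  have "inner (px - qx) (fst (grad (x, ys)) - fst (grad (x, y))) \<le> ?M * sqrt (L (xs, ys) - L (xs, y))"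
    using MXY_bound[OF bdd(1)] xy by simp
  from mult_left_mono[OF this \<gamma>]
  have bil_x: "\<gamma> * inner (px - qx) (fst (grad (x, ys)))
      \<le> \<gamma> * inner (px - qx) (fst (grad (x, y))) + \<gamma> * (?M * sqrt (L (xs, ys) - L (xs, y)))"
    by (simp add: inner_diff_right algebra_simps)
  have "inner (py - qy) (snd (grad (x, y)) - snd (grad (xs, y))) \<le> ?M * sqrt (L (x, ys) - L (xs, ys))"
    using MYX_bound[OF bdd(2)] xy by simp
  from mult_left_mono[OF this \<gamma>]
  have bil_y: "\<gamma> * inner (py - qy) (- snd (grad (xs, y)))
      \<le> \<gamma> * inner (py - qy) (- snd (grad (x, y))) + \<gamma> * (?M * sqrt (L (x, ys) - L (xs, ys)))"
    by (simp add: inner_diff_right algebra_simps)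
  have "\<gamma> * inner (p - q) (sp_r grad z)
      = \<gamma> * inner (px - qx) (fst (grad (x, y))) + \<gamma> * inner (py - qy) (- snd (grad (x, y)))"
    using zz pp qq by (simp add: sp_r_def algebra_simps)
  moreover have "sp_w L xs ys (z + \<gamma> *\<^sub>R (p - q)) = L (x + \<gamma> *\<^sub>R (px - qx), ys) - L (xs, y + \<gamma> *\<^sub>R (py - qy))"
    "sp_w L xs ys z = L (x, ys) - L (xs, y)"
    using zz pp qq by (simp_all add: sp_w_def)
  moreover have "\<gamma> * (?M * (sqrt (L (fst z, ys) - L (xs, ys)) + sqrt (L (xs, ys) - L (xs, snd z))))
      = \<gamma> * (?M * sqrt (L (x, ys) - L (xs, ys))) + \<gamma> * (?M * sqrt (L (xs, ys) - L (xs, y)))"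
    "\<gamma>\<^sup>2 * C_L X Y L grad = \<gamma>\<^sup>2 / 2 * curv_X + \<gamma>\<^sup>2 / 2 * curv_Y"
    using zz by (simp_all add: C_L_eq algebra_simps)
  ultimately show ?thesis
    using curv_x curv_y bil_x bil_y by linarith
qed

lemma sp_w_descent_gap:
  assumes bdd: "bdd_above (MXY_set X Y L grad xs ys)" "bdd_above (MYX_set X Y L grad xs ys)"
    and z: "z \<in> X \<times> Y" and pq: "p \<in> X \<times> Y" "q \<in> X \<times> Y" and \<gamma>: "0 \<le> \<gamma>"
    and z': "z + \<gamma> *\<^sub>R (p - q) \<in> X \<times> Y"
    and \<mu>: "0 < \<mu>" and M: "0 \<le> M_L X Y L grad xs ys"
    and g: "0 \<le> g" "2 * \<mu> * sp_w L xs ys z \<le> g\<^sup>2" and direction: "k * g \<le> inner (q - p) (sp_r grad z)"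
  shows "sp_w L xs ys (z + \<gamma> *\<^sub>R (p - q))
           \<le> sp_w L xs ys z - (k - M_L X Y L grad xs ys / sqrt \<mu>) * \<gamma> * g + \<gamma>\<^sup>2 * C_L X Y L grad"
proof -
  let ?M = "M_L X Y L grad xs ys"
  let ?S = "sqrt (L (fst z, ys) - L (xs, ys)) + sqrt (L (xs, ys) - L (xs, snd z))"
  have "?S * sqrt \<mu> \<le> g"
    using sqrt_add_mult_sqrt_le[OF sp_w_eq(2,3)[OF z] g(1) \<mu>] g(2) sp_w_eq(1)[OF z] by simp
  hence "?S \<le> g / sqrt \<mu>"
    using \<mu> by (simp add: le_divide_eq)
  hence "?M * ?S \<le> ?M * (g / sqrt \<mu>)"
    using M by (rule mult_left_mono)
  hence "\<gamma> * (?M * ?S) \<le> \<gamma> * (?M * (g / sqrt \<mu>))"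
    using \<gamma> by (rule mult_left_mono)
  moreover have "\<gamma> * inner (p - q) (sp_r grad z) \<le> - (\<gamma> * (k * g))"
    using mult_left_mono[OF direction \<gamma>] by (simp add: inner_diff_left right_diff_distrib)
  ultimately show ?thesis
    using sp_w_descent[OF bdd z pq \<gamma> z'] by (simp add: algebra_simps)
qed

text \<open>If \<open>X \<times> Y = {(xs, ys)}\<close>, then \<open>C_L\<close> may vanish (and \<open>\<nu> / (2 * C) = 0\<close> by HOL's division),
  but the gap \<open>sp_w\<close> vanishes on \<open>X \<times> Y\<close>; the step lemmas below treat this case separately.\<close>

lemma nontrivial_cases:
  assumes "X \<times> Y \<noteq> {(xs, ys)}"
  obtains x where "x \<in> X" "x \<noteq> xs" | y where "y \<in> Y" "y \<noteq> ys"
  using assms saddle(1,2) by blast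

lemma M_L_nonneg:
  assumes bdd: "bdd_above (MXY_set X Y L grad xs ys)" "bdd_above (MYX_set X Y L grad xs ys)"
    and nontrivial: "X \<times> Y \<noteq> {(xs, ys)}"
  shows "0 \<le> M_L X Y L grad xs ys"
  using nontrivial
proof (cases rule: nontrivial_cases)
  case (1 x)
  hence "inner (ys - ys) ((snd (grad (x, ys)) - snd (grad (xs, ys))) /\<^sub>R sqrt (L (x, ys) - L (xs, ys)))
          \<in> MYX_set X Y L grad xs ys"
    unfolding MYX_set_def using saddle by blast
  thus ?thesis
    unfolding M_L_def using cSup_upper[OF _ bdd(2)] by (simp add: le_max_iff_disj)
next
  case (2 y)
  hence "inner (xs - xs) ((fst (grad (xs, ys)) - fst (grad (xs, y))) /\<^sub>R sqrt (L (xs, ys) - L (xs, y)))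
          \<in> MXY_set X Y L grad xs ys"
    unfolding MXY_set_def using saddle by blast
  thus ?thesis
    unfolding M_L_def using cSup_upper[OF _ bdd(1)] by (simp add: le_max_iff_disj)
qed

lemma mu_int_L_le_C_L:
  assumes bdd: "bdd_below (\<Union>y\<in>Y. int_sc_set (\<lambda>x. L (x, y)) (\<lambda>x. fst (grad (x, y))) X xs)"
              "bdd_below (\<Union>x\<in>X. int_sc_set (\<lambda>y. - L (x, y)) (\<lambda>y. - snd (grad (x, y))) Y ys)"
    and nontrivial: "X \<times> Y \<noteq> {(xs, ys)}"
  shows "mu_int_L X Y L grad xs ys \<le> 2 * C_L X Y L grad"
  using nontrivial
proof (cases rule: nontrivial_cases)
  case (1 x)
  hence "mu_int_L X Y L grad xs ys \<le> curv_X"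
    unfolding mu_int_L_def curv_X_def
    using mu_int_le_curv[OF bdd(1) curv_fin(1) saddle(2) X(3) saddle(1)] by (simp add: min.coboundedI1)
  thus ?thesis
    unfolding C_L_eq using curv_Y_nonneg by simp
next
  case (2 y)
  hence "mu_int_L X Y L grad xs ys \<le> curv_Y"
    unfolding mu_int_L_def curv_Y_def
    using mu_int_le_curv[OF bdd(2) curv_fin(2) saddle(1) Y(3) saddle(2)] by (simp add: min.coboundedI2)
  thus ?thesis
    unfolding C_L_eq using curv_X_nonneg by simp
qed

lemma int_sc_gap_bound:
  assumes bdd: "bdd_below (\<Union>y\<in>Y. int_sc_set (\<lambda>x. L (x, y)) (\<lambda>x. fst (grad (x, y))) X xs)"
              "bdd_below (\<Union>x\<in>X. int_sc_set (\<lambda>y. - L (x, y)) (\<lambda>y. - snd (grad (x, y))) Y ys)"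
    and \<mu>: "0 \<le> \<mu>" "\<mu> \<le> mu_int_L X Y L grad xs ys"
    and z: "z \<in> X \<times> Y" and s: "s \<in> X \<times> Y"
    and lmo: "\<forall>s'\<in>X \<times> Y. inner s (sp_r grad z) \<le> inner s' (sp_r grad z)"
  shows "\<exists>c. 0 \<le> c \<and> c \<le> 1 \<and> sp_w L xs ys z \<le> c * fw_gap grad z s - c\<^sup>2 * \<mu> / 2"
proof -
  obtain x y where zz: "z = (x, y)" by (cases z)
  obtain sx sy where ss: "s = (sx, sy)" by (cases s)
  have xy: "x \<in> X" "y \<in> Y" "sx \<in> X" "sy \<in> Y"
    using z s zz ss by auto
  have lmo_x: "inner sx (fst (grad (x, y))) \<le> inner a (fst (grad (x, y)))" if "a \<in> X" for a
    using lmo[rule_format, of "(a, sy)"] that xy zz ss by (simp add: sp_r_def)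
  have lmo_y: "inner sy (- snd (grad (x, y))) \<le> inner b (- snd (grad (x, y)))" if "b \<in> Y" for b
    using lmo[rule_format, of "(sx, b)"] that xy zz ss by (simp add: sp_r_def)
  define gx where "gx = inner (x - sx) (fst (grad (x, y)))"
  define gy where "gy = inner (y - sy) (- snd (grad (x, y)))"
  have "0 \<le> gx" "0 \<le> gy"
    unfolding gx_def gy_def using lmo_x[OF xy(1)] lmo_y[OF xy(2)] by (simp_all add: inner_diff_left)
  moreover obtain cx where "0 \<le> cx" "cx \<le> 1" "L (x, y) - L (xs, y) \<le> cx * gx - cx\<^sup>2 * \<mu> / 2"
    using int_sc_block_bound[OF bdd(1) xy(2) X(3) saddle(1) xy(1) lmo_x, of \<mu>] \<mu>(2)
    unfolding gx_def mu_int_L_def by auto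
  moreover obtain cy where "0 \<le> cy" "cy \<le> 1" "- L (x, y) - - L (x, ys) \<le> cy * gy - cy\<^sup>2 * \<mu> / 2"
    using int_sc_block_bound[OF bdd(2) xy(1) Y(3) saddle(2) xy(2) lmo_y, of \<mu>] \<mu>(2)
    unfolding gy_def mu_int_L_def by auto
  ultimately obtain c where "0 \<le> c" "c \<le> 1"
      "(L (x, y) - L (xs, y)) + (- L (x, y) - - L (x, ys)) \<le> c * (gx + gy) - c\<^sup>2 * \<mu> / 2"
    using quadratic_gap_bound_add[of gx gy \<mu>] \<mu>(1) by blast
  moreover have "fw_gap grad z s = gx + gy"
    unfolding fw_gap_def gx_def gy_def zz ss by (simp add: sp_r_def)
  ultimately show ?thesis
    unfolding zz sp_w_def by (intro exI[of _ c]) simp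
qed

lemma spfw_step_contraction:
  assumes bddM: "bdd_above (MXY_set X Y L grad xs ys)" "bdd_above (MYX_set X Y L grad xs ys)"
    and bddI: "bdd_below (\<Union>y\<in>Y. int_sc_set (\<lambda>x. L (x, y)) (\<lambda>x. fst (grad (x, y))) X xs)"
              "bdd_below (\<Union>x\<in>X. int_sc_set (\<lambda>y. - L (x, y)) (\<lambda>y. - snd (grad (x, y))) Y ys)"
    and \<mu>: "\<mu> = mu_int_L X Y L grad xs ys" "0 < \<mu>" and C: "C = C_L X Y L grad"
    and \<nu>: "\<nu> = 1 - M_L X Y L grad xs ys / sqrt \<mu>" "0 < \<nu>"
    and z: "z \<in> X \<times> Y" and s: "s \<in> X \<times> Y" and lmo: "\<forall>s'\<in>X \<times> Y. inner s (sp_r grad z) \<le> inner s' (sp_r grad z)"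
    and \<gamma>: "\<gamma> = min 1 (\<nu> / (2 * C) * fw_gap grad z s)"
  shows "sp_w L xs ys ((1 - \<gamma>) *\<^sub>R z + \<gamma> *\<^sub>R s) \<le> (1 - \<nu>\<^sup>2 / 2 * (\<mu> / C)) * sp_w L xs ys z"
proof (cases "X \<times> Y = {(xs, ys)}")
  case True
  thus ?thesis
    using z s by (simp add: sp_w_def)
next
  case nontrivial: False
  define w where "w = sp_w L xs ys z"
  define g where "g = fw_gap grad z s"
  have \<mu>C: "\<mu> \<le> 2 * C" and M: "0 \<le> M_L X Y L grad xs ys"
    using mu_int_L_le_C_L[OF bddI nontrivial] M_L_nonneg[OF bddM nontrivial] \<mu>(1) C by simp_all
  have C_pos: "0 < C"
    using \<mu>C \<mu>(2) by simp
  have \<nu>1: "\<nu> \<le> 1"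
    using \<nu>(1) M \<mu>(2) by simp
  have g: "0 \<le> g"
    unfolding g_def using fw_gap_nonneg[OF z lmo] .
  obtain c where c: "0 \<le> c" "c \<le> 1" "w \<le> c * g - c\<^sup>2 * \<mu> / 2"
    using int_sc_gap_bound[OF bddI _ _ z s lmo, of \<mu>] \<mu> unfolding w_def g_def by auto
  have "2 * \<mu> * w \<le> 2 * \<mu> * (c * g - c\<^sup>2 * \<mu> / 2)"
    using c(3) \<mu>(2) by simp
  hence gap: "2 * \<mu> * w \<le> g\<^sup>2"
    using quadratic_gap_le_square[OF \<mu>(2), of c g] by linarith
  have \<gamma>01: "0 \<le> \<gamma>" "\<gamma> \<le> 1"
    unfolding \<gamma> using g \<nu>(2) C_pos g_def by auto
  have z': "(1 - \<gamma>) *\<^sub>R z + \<gamma> *\<^sub>R s = z + \<gamma> *\<^sub>R (s - z)"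
    by (simp add: algebra_simps)
  have "z + \<gamma> *\<^sub>R (s - z) \<in> X \<times> Y"
    using convexD[OF convex_Times[OF X(2) Y(2)] z s, of "1 - \<gamma>" \<gamma>] \<gamma>01 z' by simp
  from sp_w_descent_gap[OF bddM z s z \<gamma>01(1) this \<mu>(2) M g gap[unfolded w_def], of 1]
  have step: "sp_w L xs ys ((1 - \<gamma>) *\<^sub>R z + \<gamma> *\<^sub>R s) \<le> w - \<nu> * \<gamma> * g + \<gamma>\<^sup>2 * C"
    unfolding z' w_def g_def fw_gap_def \<nu>(1) C by simp
  show ?thesis
  proof (cases "\<nu> / (2 * C) * g \<le> 1")
    case True
    hence "\<gamma> = \<nu> / (2 * C) * g"
      unfolding \<gamma> g_def by simp
    from contraction_of_short_step[OF C_pos step this gap] show ?thesis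
      unfolding w_def .
  next
    case False
    hence "\<gamma> = 1" "2 * C \<le> \<nu> * g"
      unfolding \<gamma> g_def using C_pos by (simp_all add: field_simps)
    with contraction_of_full_step[OF C_pos \<nu>(2) \<nu>1 less_imp_le[OF \<mu>(2)] \<mu>C c,
        of "sp_w L xs ys ((1 - \<gamma>) *\<^sub>R z + \<gamma> *\<^sub>R s)"] step
    show ?thesis
      unfolding w_def by simp
  qed
qed

lemma spfw_run_contraction:
  assumes bddM: "bdd_above (MXY_set X Y L grad xs ys)" "bdd_above (MYX_set X Y L grad xs ys)"
    and bddI: "bdd_below (\<Union>y\<in>Y. int_sc_set (\<lambda>x. L (x, y)) (\<lambda>x. fst (grad (x, y))) X xs)"
              "bdd_below (\<Union>x\<in>X. int_sc_set (\<lambda>y. - L (x, y)) (\<lambda>y. - snd (grad (x, y))) Y ys)"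
    and \<mu>: "\<mu> = mu_int_L X Y L grad xs ys" "0 < \<mu>" and C: "C = C_L X Y L grad"
    and \<nu>: "\<nu> = 1 - M_L X Y L grad xs ys / sqrt \<mu>" "0 < \<nu>"
    and run: "spfw_run X Y grad \<nu> C z s"
  shows "sp_w L xs ys (z (Suc t)) \<le> (1 - \<nu>\<^sup>2 / 2 * (\<mu> / C)) * sp_w L xs ys (z t)"
  using spfw_step_contraction[OF bddM bddI \<mu> C \<nu> _ spfw_run_step(1,2)[OF run] refl]
    spfw_run_in_domain[OF run X(2) Y(2) less_imp_le[OF \<nu>(2)]] spfw_run_step(3)[OF run] C_L_nonneg C
  by simp

lemma mu_geo_L_le_C_L:
  assumes A: "finite A" "X = convex hull A" and B: "finite B" "Y = convex hull B"
    and bdd: "bdd_below (\<Union>y\<in>Y. geo_sc_set (\<lambda>x. L (x, y)) (\<lambda>x. fst (grad (x, y))) A)"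
             "bdd_below (\<Union>x\<in>X. geo_sc_set (\<lambda>y. - L (x, y)) (\<lambda>y. - snd (grad (x, y))) B)"
    and nontrivial: "X \<times> Y \<noteq> {(xs, ys)}"
  shows "mu_geo_L A B L grad \<le> 2 * C_L X Y L grad"
  using nontrivial
proof (cases rule: nontrivial_cases)
  case 1
  then obtain a where a: "a \<in> A" "a \<noteq> xs"
    using A(2) hull_minimal[of A "{xs}" convex] by auto
  have aX: "a \<in> X"
    using a(1) A(2) by (simp add: hull_inc)
  have "inner (fst (grad (a, ys))) (xs - a) < 0"
    using L_x_above_tangent[OF aX saddle(1,2)] L_x_strict_min[OF aX a(2)]
    by (simp add: inner_commute)
  hence "(INF y\<in>convex hull B. mu_geo (\<lambda>x. L (x, y)) (\<lambda>x. fst (grad (x, y))) A)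
      \<le> (SUP y\<in>convex hull B. curv (\<lambda>x. L (x, y)) (\<lambda>x. fst (grad (x, y))) (convex hull A))"
    by (intro mu_geo_le_curv[where F="\<lambda>y x. L (x, y)" and p=ys and a=a and xc=xs])
       (use A B bdd(1) curv_fin(1) saddle a in auto)
  moreover have "curv_X = (SUP y\<in>convex hull B. curv (\<lambda>x. L (x, y)) (\<lambda>x. fst (grad (x, y))) (convex hull A))"
    unfolding curv_X_def using A(2) B(2) by simp
  ultimately have "mu_geo_L A B L grad \<le> curv_X"
    unfolding mu_geo_L_def by (simp add: min.coboundedI1)
  thus ?thesis
    unfolding C_L_eq using curv_Y_nonneg by simp
next
  case 2
  then obtain b where b: "b \<in> B" "b \<noteq> ys"
    using B(2) hull_minimal[of B "{ys}" convex] by auto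
  have bY: "b \<in> Y"
    using b(1) B(2) by (simp add: hull_inc)
  have "inner (- snd (grad (xs, b))) (ys - b) < 0"
    using neg_L_y_above_tangent[OF saddle(1) bY saddle(2)] L_y_strict_max[OF bY b(2)]
    by (simp add: inner_commute)
  hence "(INF x\<in>convex hull A. mu_geo (\<lambda>y. - L (x, y)) (\<lambda>y. - snd (grad (x, y))) B)
      \<le> (SUP x\<in>convex hull A. curv (\<lambda>y. - L (x, y)) (\<lambda>y. - snd (grad (x, y))) (convex hull B))"
    by (intro mu_geo_le_curv[where F="\<lambda>x y. - L (x, y)" and p=xs and a=b and xc=ys])
       (use A B bdd(2) curv_fin(2) saddle b in auto)
  moreover have "curv_Y = (SUP x\<in>convex hull A. curv (\<lambda>y. - L (x, y)) (\<lambda>y. - snd (grad (x, y))) (convex hull B))"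
    unfolding curv_Y_def using A(2) B(2) by simp
  ultimately have "mu_geo_L A B L grad \<le> curv_Y"
    unfolding mu_geo_L_def by (simp add: min.coboundedI2)
  thus ?thesis
    unfolding C_L_eq using curv_X_nonneg by simp
qed

lemma geo_sc_gap_bound:
  assumes A: "finite A" "X = convex hull A" and B: "finite B" "Y = convex hull B"
    and bdd: "bdd_below (\<Union>y\<in>Y. geo_sc_set (\<lambda>x. L (x, y)) (\<lambda>x. fst (grad (x, y))) A)"
             "bdd_below (\<Union>x\<in>X. geo_sc_set (\<lambda>y. - L (x, y)) (\<lambda>y. - snd (grad (x, y))) B)"
    and \<mu>: "0 \<le> \<mu>" "\<mu> \<le> mu_geo_L A B L grad"
    and wx: "convex_weights A \<alpha>x (fst z)" and wy: "convex_weights B \<alpha>y (snd z)"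
    and s: "s \<in> A \<times> B"
    and lmo: "\<forall>s'\<in>(convex hull A) \<times> (convex hull B). inner s (sp_r grad z) \<le> inner s' (sp_r grad z)"
    and v: "v \<in> {a\<in>A. 0 < \<alpha>x a} \<times> {b\<in>B. 0 < \<alpha>y b}"
    and vmax: "\<forall>v'\<in>{a\<in>A. 0 < \<alpha>x a} \<times> {b\<in>B. 0 < \<alpha>y b}. inner (sp_r grad z) v' \<le> inner (sp_r grad z) v"
  shows "\<exists>c. 0 \<le> c \<and> c \<le> 1 \<and> sp_w L xs ys z \<le> c * pfw_gap grad z s v - c\<^sup>2 * \<mu> / 2"
proof -
  obtain x y where zz: "z = (x, y)" by (cases z)
  obtain sx sy where ss: "s = (sx, sy)" by (cases s)
  obtain vx vy where vv: "v = (vx, vy)" by (cases v)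
  let ?gx = "fst (grad (x, y))" and ?gy = "- snd (grad (x, y))"
  have xy: "x \<in> X" "y \<in> Y"
    using convex_weights_mem_hull[OF A(1) wx] convex_weights_mem_hull[OF B(1) wy] A(2) B(2) zz by simp_all
  have sv: "sx \<in> A" "sy \<in> B" "vx \<in> {a\<in>A. 0 < \<alpha>x a}" "vy \<in> {b\<in>B. 0 < \<alpha>y b}"
    using s v ss vv by auto
  have "inner ?gx sx \<le> inner ?gx a" if "a \<in> A" for a
    using lmo[rule_format, of "(a, sy)"] that sv(2) zz ss by (simp add: sp_r_def inner_commute hull_inc)
  hence lmo_x: "\<forall>a\<in>A. inner ?gx sx \<le> inner ?gx a" ..
  have "inner ?gy sy \<le> inner ?gy b" if "b \<in> B" for b
    using lmo[rule_format, of "(sx, b)"] that sv(1) zz ss by (simp add: sp_r_def inner_commute hull_inc)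
  hence lmo_y: "\<forall>b\<in>B. inner ?gy sy \<le> inner ?gy b" ..
  have vmax_x: "\<forall>a\<in>{a\<in>A. 0 < \<alpha>x a}. inner ?gx a \<le> inner ?gx vx"
    using vmax sv(4) zz vv by (force simp: sp_r_def)
  have vmax_y: "\<forall>b\<in>{b\<in>B. 0 < \<alpha>y b}. inner ?gy b \<le> inner ?gy vy"
    using vmax sv(3) zz vv by (force simp: sp_r_def)
  define gx where "gx = inner ?gx (vx - sx)"
  define gy where "gy = inner ?gy (vy - sy)"
  have "0 \<le> gx" "0 \<le> gy"
    unfolding gx_def gy_def using lmo_x sv(3) lmo_y sv(4) by (auto simp: inner_diff_right)
  moreover have "\<exists>cx. 0 \<le> cx \<and> cx \<le> 1 \<and> L (x, y) - L (xs, y) \<le> cx * gx - cx\<^sup>2 * \<mu> / 2"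
    unfolding gx_def
    by (rule geo_sc_block_bound[where F="\<lambda>y x. L (x, y)" and P="convex hull B" and S="{a\<in>A. 0 < \<alpha>x a}"])
       (use A B bdd(1) xy saddle(1) \<mu>(2) L_x_above_tangent[OF xy(1) saddle(1) xy(2)]
          convex_weights_support[OF A(1) wx] sv(3) vmax_x lmo_x zz in \<open>auto simp: mu_geo_L_def\<close>)
  moreover have "\<exists>cy. 0 \<le> cy \<and> cy \<le> 1 \<and> - L (x, y) - - L (x, ys) \<le> cy * gy - cy\<^sup>2 * \<mu> / 2"
    unfolding gy_def
    by (rule geo_sc_block_bound[where F="\<lambda>x y. - L (x, y)" and P="convex hull A" and S="{b\<in>B. 0 < \<alpha>y b}"])
       (use A B bdd(2) xy saddle(2) \<mu>(2) neg_L_y_above_tangent[OF xy(1) xy(2) saddle(2)]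
          convex_weights_support[OF B(1) wy] sv(4) vmax_y lmo_y zz in \<open>auto simp: mu_geo_L_def\<close>)
  ultimately obtain c where "0 \<le> c" "c \<le> 1"
      "(L (x, y) - L (xs, y)) + (- L (x, y) - - L (x, ys)) \<le> c * (gx + gy) - c\<^sup>2 * \<mu> / 2"
    using quadratic_gap_bound_add[of gx gy \<mu>] \<mu>(1) by metis
  moreover have "pfw_gap grad z s v = gx + gy"
    unfolding pfw_gap_def gx_def gy_def zz ss vv by (simp add: sp_r_def inner_diff_right)
  ultimately show ?thesis
    unfolding zz sp_w_def by (intro exI[of _ c]) simp
qed

lemma spafw_step_contraction:
  assumes A: "finite A" "X = convex hull A" and B: "finite B" "Y = convex hull B"
    and bddG: "bdd_below (\<Union>y\<in>Y. geo_sc_set (\<lambda>x. L (x, y)) (\<lambda>x. fst (grad (x, y))) A)"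
              "bdd_below (\<Union>x\<in>X. geo_sc_set (\<lambda>y. - L (x, y)) (\<lambda>y. - snd (grad (x, y))) B)"
    and bddM: "bdd_above (MXY_set X Y L grad xs ys)" "bdd_above (MYX_set X Y L grad xs ys)"
    and \<mu>: "\<mu> = mu_geo_L A B L grad" "0 < \<mu>" and C: "C = C_L X Y L grad"
    and \<nu>: "\<nu> = 1 / 2 - M_L X Y L grad xs ys / sqrt \<mu>" "0 < \<nu>"
    and wx: "convex_weights A \<alpha>x (fst z)" and wy: "convex_weights B \<alpha>y (snd z)"
    and s: "s \<in> A \<times> B"
    and lmo: "\<forall>s'\<in>(convex hull A) \<times> (convex hull B). inner s (sp_r grad z) \<le> inner s' (sp_r grad z)"
    and v: "v \<in> {a\<in>A. 0 < \<alpha>x a} \<times> {b\<in>B. 0 < \<alpha>y b}"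
    and vmax: "\<forall>v'\<in>{a\<in>A. 0 < \<alpha>x a} \<times> {b\<in>B. 0 < \<alpha>y b}. inner (sp_r grad z) v' \<le> inner (sp_r grad z) v"
    and \<gamma>: "0 \<le> \<gamma>" "\<gamma> \<le> \<nu> / (2 * C) * pfw_gap grad z s v"
    and z': "z' = z + \<gamma> *\<^sub>R (if afw_fw_step grad z s v then s - z else z - v)" "z' \<in> X \<times> Y"
  shows "sp_w L xs ys z' \<le> sp_w L xs ys z"
    and "\<gamma> = \<nu> / (2 * C) * pfw_gap grad z s v \<or> 1 \<le> \<gamma>
           \<Longrightarrow> sp_w L xs ys z' \<le> (1 - \<nu>\<^sup>2 / 2 * (\<mu> / C)) * sp_w L xs ys z"
proof -
  have z: "z \<in> X \<times> Y"
    using convex_weights_mem_hull[OF A(1) wx] convex_weights_mem_hull[OF B(1) wy] A(2) B(2)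
    by (simp add: mem_Times_iff)
  have "sp_w L xs ys z' \<le> sp_w L xs ys z
        \<and> (\<gamma> = \<nu> / (2 * C) * pfw_gap grad z s v \<or> 1 \<le> \<gamma>
             \<longrightarrow> sp_w L xs ys z' \<le> (1 - \<nu>\<^sup>2 / 2 * (\<mu> / C)) * sp_w L xs ys z)"
  proof (cases "X \<times> Y = {(xs, ys)}")
    case True
    thus ?thesis
      using z z'(2) by (simp add: sp_w_def)
  next
    case nontrivial: False
    define w where "w = sp_w L xs ys z"
    define g where "g = pfw_gap grad z s v"
    have \<mu>C: "\<mu> \<le> 2 * C" and M: "0 \<le> M_L X Y L grad xs ys"
      using mu_geo_L_le_C_L[OF A B bddG nontrivial] M_L_nonneg[OF bddM nontrivial] \<mu>(1) C by simp_all
    have C_pos: "0 < C"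
      using \<mu>C \<mu>(2) by simp
    have \<nu>_half: "\<nu> \<le> 1 / 2"
      using \<nu>(1) M \<mu>(2) by simp
    have gaps: "0 \<le> inner (- sp_r grad z) (s - z)" "0 \<le> inner (- sp_r grad z) (z - v)"
      using afw_gaps_nonneg[OF A(1) B(1) wx wy lmo v vmax] by simp_all
    hence g: "0 \<le> g"
      unfolding g_def pfw_gap_def inner_add_right by linarith
    obtain c where c: "0 \<le> c" "c \<le> 1" "w \<le> c * g - c\<^sup>2 * \<mu> / 2"
      using geo_sc_gap_bound[OF A B bddG _ _ wx wy s lmo v vmax, of \<mu>] \<mu> unfolding w_def g_def by auto
    have "2 * \<mu> * w \<le> 2 * \<mu> * (c * g - c\<^sup>2 * \<mu> / 2)"
      using c(3) \<mu>(2) by simp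
    hence gap: "2 * \<mu> * w \<le> g\<^sup>2"
      using quadratic_gap_le_square[OF \<mu>(2), of c g] by linarith
    define p where "p = (if afw_fw_step grad z s v then s else z)"
    define q where "q = (if afw_fw_step grad z s v then z else v)"
    have pq: "p \<in> X \<times> Y" "q \<in> X \<times> Y"
      unfolding p_def q_def using s v z A(2) B(2) by (auto intro: hull_inc)
    have z'_pq: "z' = z + \<gamma> *\<^sub>R (p - q)"
      unfolding z'(1) p_def q_def by simp
    have "inner (q - p) (sp_r grad z) = max (inner (- sp_r grad z) (s - z)) (inner (- sp_r grad z) (z - v))"
      unfolding p_def q_def afw_fw_step_def
      by (auto simp: max_def inner_commute[of _ "sp_r grad z"] inner_diff_right)
    hence "1 / 2 * g \<le> inner (q - p) (sp_r grad z)"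
      unfolding g_def pfw_gap_def inner_add_right by (simp add: max_def)
    from sp_w_descent_gap[OF bddM z pq \<gamma>(1) z'(2)[unfolded z'_pq] \<mu>(2) M g gap[unfolded w_def] this]
    have step: "sp_w L xs ys z' \<le> w - \<nu> * \<gamma> * g + \<gamma>\<^sup>2 * C"
      unfolding z'_pq w_def \<nu>(1) C by simp
    have "sp_w L xs ys z' \<le> w"
      using nonincrease_of_step[OF C_pos \<gamma>(1) \<gamma>(2)[folded g_def] less_imp_le[OF \<nu>(2)] g step] .
    moreover have "sp_w L xs ys z' \<le> (1 - \<nu>\<^sup>2 / 2 * (\<mu> / C)) * w" if "\<gamma> = \<nu> / (2 * C) * g \<or> 1 \<le> \<gamma>"
      using that
    proof
      assume "\<gamma> = \<nu> / (2 * C) * g"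
      from contraction_of_short_step[OF C_pos step this gap] show ?thesis .
    next
      assume "1 \<le> \<gamma>"
      from contraction_of_long_step[OF C_pos \<nu>(2) \<nu>_half less_imp_le[OF \<mu>(2)] \<mu>C c this
          \<gamma>(2)[folded g_def] g step]
      show ?thesis .
    qed
    ultimately show ?thesis
      unfolding w_def g_def by blast
  qed
  thus "sp_w L xs ys z' \<le> sp_w L xs ys z"
    and "\<gamma> = \<nu> / (2 * C) * pfw_gap grad z s v \<or> 1 \<le> \<gamma>
           \<Longrightarrow> sp_w L xs ys z' \<le> (1 - \<nu>\<^sup>2 / 2 * (\<mu> / C)) * sp_w L xs ys z"
    by blast+
qed

lemma spafw_run_contraction:
  assumes A: "finite A" "X = convex hull A" and B: "finite B" "Y = convex hull B"
    and bddG: "bdd_below (\<Union>y\<in>Y. geo_sc_set (\<lambda>x. L (x, y)) (\<lambda>x. fst (grad (x, y))) A)"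
              "bdd_below (\<Union>x\<in>X. geo_sc_set (\<lambda>y. - L (x, y)) (\<lambda>y. - snd (grad (x, y))) B)"
    and bddM: "bdd_above (MXY_set X Y L grad xs ys)" "bdd_above (MYX_set X Y L grad xs ys)"
    and \<mu>: "\<mu> = mu_geo_L A B L grad" "0 < \<mu>" and C: "C = C_L X Y L grad"
    and \<nu>: "\<nu> = 1 / 2 - M_L X Y L grad xs ys / sqrt \<mu>" "0 < \<nu>"
    and run: "spafw_run A B grad \<nu> C z ax ay s v gam gmax"
  shows "sp_w L xs ys (z (Suc t)) \<le> sp_w L xs ys (z t)"
    and "gam t < gmax t \<or> 1 \<le> gmax t
           \<Longrightarrow> sp_w L xs ys (z (Suc t)) \<le> (1 - \<nu>\<^sup>2 / 2 * (\<mu> / C)) * sp_w L xs ys (z t)"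
proof -
  have \<nu>C: "0 \<le> \<nu>" "0 \<le> C"
    using \<nu>(2) C_L_nonneg C by simp_all
  note weights = spafw_run_convex_weights[OF run A(1) B(1) \<nu>C]
  note step = spafw_run_step[OF run, of t]
  have "z (Suc t) \<in> X \<times> Y"
    using spafw_run_in_domain[OF run A(1) B(1) \<nu>C] A(2) B(2) by simp
  note contraction = spafw_step_contraction[OF A B bddG bddM \<mu> C \<nu> weights[of t, THEN conjunct1]
      weights[of t, THEN conjunct2] step(1-4) spafw_run_step_nonneg(4)[OF run A(1) B(1) \<nu>C]
      _ step(7) this]
  show "sp_w L xs ys (z (Suc t)) \<le> sp_w L xs ys (z t)"
    using contraction(1) step(6) weights by simp
  show "sp_w L xs ys (z (Suc t)) \<le> (1 - \<nu>\<^sup>2 / 2 * (\<mu> / C)) * sp_w L xs ys (z t)"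
    if "gam t < gmax t \<or> 1 \<le> gmax t"
    using contraction(2) step(6) weights that by (auto simp: min_def split: if_splits)
qed

end

theorem lemma23:
  fixes X :: "'a::euclidean_space set" and Y :: "'b::euclidean_space set"
    and L :: "'a \<times> 'b \<Rightarrow> real" and grad :: "'a \<times> 'b \<Rightarrow> 'a \<times> 'b"
    and xs :: 'a and ys :: 'b
  assumes X: "X \<noteq> {}" "convex X" "compact X"
    and Y: "Y \<noteq> {}" "convex Y" "compact Y"
    and diff: "\<forall>z\<in>X \<times> Y. (L has_derivative (\<lambda>h. inner (grad z) h)) (at z)"
    and sc: "\<exists>\<mu>X \<mu>Y. \<mu>X > 0 \<and> \<mu>Y > 0 \<and> (\<forall>y\<in>Y. sconvex_on \<mu>X X (\<lambda>x. L (x, y)))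
                                     \<and> (\<forall>x\<in>X. sconvex_on \<mu>Y Y (\<lambda>y. - L (x, y)))"
    and saddle: "xs \<in> X" "ys \<in> Y" "\<forall>x\<in>X. \<forall>y\<in>Y. L (xs, y) \<le> L (xs, ys) \<and> L (xs, ys) \<le> L (x, ys)"
    and curv_fin: "bdd_above (\<Union>y\<in>Y. curv_set (\<lambda>x. L (x, y)) (\<lambda>x. fst (grad (x, y))) X)"
                  "bdd_above (\<Union>x\<in>X. curv_set (\<lambda>y. - L (x, y)) (\<lambda>y. - snd (grad (x, y))) Y)"
  shows
   "(\<forall>z s. let \<mu> = mu_int_L X Y L grad xs ys;
               \<nu> = 1 - M_L X Y L grad xs ys / sqrt \<mu>;
               C = C_L X Y L grad;
               \<rho> = \<nu>\<^sup>2 / 2 * (\<mu> / C)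
           in (xs, ys) \<in> rel_interior (X \<times> Y)
              \<and> bdd_below (\<Union>y\<in>Y. int_sc_set (\<lambda>x. L (x, y)) (\<lambda>x. fst (grad (x, y))) X xs)
              \<and> bdd_below (\<Union>x\<in>X. int_sc_set (\<lambda>y. - L (x, y)) (\<lambda>y. - snd (grad (x, y))) Y ys)
              \<and> \<mu> > 0
              \<and> bdd_above (MXY_set X Y L grad xs ys) \<and> bdd_above (MYX_set X Y L grad xs ys)
              \<and> \<nu> > 0
              \<and> spfw_run X Y grad \<nu> C z s
           \<longrightarrow> (\<forall>t. sp_w L xs ys (z (Suc t)) \<le> (1 - \<rho>) * sp_w L xs ys (z t)))
    \<and>
    (\<forall>A B z ax ay s v gam gmax. let \<mu> = mu_geo_L A B L grad;
               \<nu> = 1 / 2 - M_L X Y L grad xs ys / sqrt \<mu>;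
               C = C_L X Y L grad;
               \<rho> = \<nu>\<^sup>2 / 2 * (\<mu> / C);
               drop = (\<lambda>t. gam t = gmax t \<and> gmax t < 1)
           in finite A \<and> finite B \<and> X = convex hull A \<and> Y = convex hull B
              \<and> bdd_below (\<Union>y\<in>Y. geo_sc_set (\<lambda>x. L (x, y)) (\<lambda>x. fst (grad (x, y))) A)
              \<and> bdd_below (\<Union>x\<in>X. geo_sc_set (\<lambda>y. - L (x, y)) (\<lambda>y. - snd (grad (x, y))) B)
              \<and> \<mu> > 0
              \<and> bdd_above (MXY_set X Y L grad xs ys) \<and> bdd_above (MYX_set X Y L grad xs ys)
              \<and> \<nu> > 0
              \<and> spafw_run A B grad \<nu> C z ax ay s v gam gmax
           \<longrightarrow> (\<forall>t. (gam t < gmax t \<or> gmax t \<ge> 1) \<longrightarrow> sp_w L xs ys (z (Suc t)) \<le> (1 - \<rho>) * sp_w L xs ys (z t))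
             \<and> (\<forall>t. drop t \<longrightarrow> sp_w L xs ys (z (Suc t)) \<le> sp_w L xs ys (z t))
             \<and> (\<forall>T. real (card {t. t < T \<and> drop t}) \<le> 2 / 3 * real T))"
proof -
  interpret saddle_problem X Y L grad xs ys
    using assms by unfold_locales
  show ?thesis
    unfolding Let_def
    apply (intro conjI allI impI; elim conjE)
    subgoal by (rule spfw_run_contraction) (assumption | rule refl)+
    subgoal by (rule spafw_run_contraction(2)) (assumption | rule refl)+
    subgoal by (rule spafw_run_contraction(1)) (assumption | rule refl)+
    subgoal by (rule spafw_run_drop_steps_le) (assumption | rule C_L_nonneg less_imp_le)+
    done
qed

end
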